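(* Let $\mathcal E$ be a completely positive trace-preserving map on $M_d$, and let $L\ge1$ be an integer. Regard $\mathcal E^L$ as a linear operator on the $d^2$-dimensional space $M_d$, with trace $\mathrm{Tr}(\mathcal E^L)$; equivalently, this is $\mathrm{Tr}(E^L)$ for the $d^2\times d^2$ transfer matrix $E$ representing $\mathcal E$. Then $$1-d^{5/2}\tau(\mathcal E)^L\le\mathrm{Tr}(\mathcal E^L)\le 1+d^{5/2}\tau(\mathcal E)^L.$$
   Context: $M_d$ is the space of complex $d\times d$ matrices. The ergodicity coefficient is $\tau(\mathcal F):=\sup\{\|\mathcal F(\sigma)\|_1/\|\sigma\|_1:\ 0\ne\sigma\in M_d,\ \mathrm{Tr}\,\sigma=0\}$, where $\|\cdot\|_1$ is the trace norm. *)

theory Defs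
  imports "HOL-Analysis.Analysis" "Jordan_Normal_Form.Matrix" "Jordan_Normal_Form.Conjugate"
begin

text \<open>Complex d x d matrices are represented as Jordan_Normal_Form matrices in carrier_mat d d.
  Super-operators are functions on complex mat; only their behaviour on carrier_mat d d matters.\<close>

definition cmat_trace :: "complex mat \<Rightarrow> complex" where
  "cmat_trace A = (\<Sum>i<dim_row A. A $$ (i,i))"

definition cmat_adjoint :: "complex mat \<Rightarrow> complex mat" where
  "cmat_adjoint A = mat (dim_col A) (dim_row A) (\<lambda>(i,j). cnj (A $$ (j,i)))"

definition psd :: "nat \<Rightarrow> complex mat \<Rightarrow> bool" where
  "psd n A \<longleftrightarrow> A \<in> carrier_mat n n \<and> cmat_adjoint A = A \<and>
     (\<forall>v \<in> carrier_vec n. conjugate v \<bullet> (A *\<^sub>v v) \<ge> 0)"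

definition trace_norm :: "complex mat \<Rightarrow> real" where
  "trace_norm A = Re (cmat_trace
     (THE P. psd (dim_col A) P \<and> P * P = cmat_adjoint A * A))"

definition linear_on_Md :: "nat \<Rightarrow> (complex mat \<Rightarrow> complex mat) \<Rightarrow> bool" where
  "linear_on_Md d E \<longleftrightarrow>
     (\<forall>X \<in> carrier_mat d d. E X \<in> carrier_mat d d) \<and>
     (\<forall>X \<in> carrier_mat d d. \<forall>Y \<in> carrier_mat d d. E (X + Y) = E X + E Y) \<and>
     (\<forall>c. \<forall>X \<in> carrier_mat d d. E (c \<cdot>\<^sub>m X) = c \<cdot>\<^sub>m E X)"

text \<open>The (i,j) d x d block of a (k d) x (k d) matrix, using the identification
  M_k tensor M_d = M_(k d) with index (i,a) mapped to i*d+a.\<close>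
definition block :: "nat \<Rightarrow> complex mat \<Rightarrow> nat \<Rightarrow> nat \<Rightarrow> complex mat" where
  "block d X i j = mat d d (\<lambda>(a,b). X $$ (i*d+a, j*d+b))"

definition id_tensor :: "nat \<Rightarrow> nat \<Rightarrow> (complex mat \<Rightarrow> complex mat) \<Rightarrow> complex mat \<Rightarrow> complex mat" where
  "id_tensor k d E X = mat (k*d) (k*d)
     (\<lambda>(r,c). E (block d X (r div d) (c div d)) $$ (r mod d, c mod d))"

definition completely_positive :: "nat \<Rightarrow> (complex mat \<Rightarrow> complex mat) \<Rightarrow> bool" where
  "completely_positive d E \<longleftrightarrow>
     (\<forall>k X. psd (k*d) X \<longrightarrow> psd (k*d) (id_tensor k d E X))"

definition trace_preserving :: "nat \<Rightarrow> (complex mat \<Rightarrow> complex mat) \<Rightarrow> bool" where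
  "trace_preserving d E \<longleftrightarrow> (\<forall>X \<in> carrier_mat d d. cmat_trace (E X) = cmat_trace X)"

definition CPTP :: "nat \<Rightarrow> (complex mat \<Rightarrow> complex mat) \<Rightarrow> bool" where
  "CPTP d E \<longleftrightarrow> linear_on_Md d E \<and> completely_positive d E \<and> trace_preserving d E"

text \<open>Ergodicity coefficient; the supremum of the empty set (d = 1) is taken to be 0.\<close>
definition ergodicity_coeff :: "nat \<Rightarrow> (complex mat \<Rightarrow> complex mat) \<Rightarrow> real" where
  "ergodicity_coeff d E = Sup (insert 0
     {trace_norm (E \<sigma>) / trace_norm \<sigma> | \<sigma>.
        \<sigma> \<in> carrier_mat d d \<and> \<sigma> \<noteq> 0\<^sub>m d d \<and> cmat_trace \<sigma> = 0})"

definition matrix_unit :: "nat \<Rightarrow> nat \<Rightarrow> nat \<Rightarrow> complex mat" where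
  "matrix_unit d a b = mat d d (\<lambda>(i,j). if i = a \<and> j = b then 1 else 0)"

text \<open>Trace of a linear operator F on M_d, computed in the basis of matrix units
  (= trace of its d^2 x d^2 transfer matrix).\<close>
definition op_trace :: "nat \<Rightarrow> (complex mat \<Rightarrow> complex mat) \<Rightarrow> complex" where
  "op_trace d F = (\<Sum>a<d. \<Sum>b<d. F (matrix_unit d a b) $$ (a,b))"

end

theory Submission
  imports Defs "Jordan_Normal_Form.Schur_Decomposition"
begin

text \<open>
  Expand the trace of E^L in the basis of matrix units e_ab and split e_ab = s_ab + [a = b] I/d
  with Tr s_ab = 0. The identity parts contribute Tr E^L(I/d) = 1 by trace preservation; each
  traceless part satisfies |E^L(s_ab)_ab| \<le> ||E^L(s_ab)||_1 \<le> \<tau>^L ||s_ab||_1 \<le> \<tau>^L sqrt d,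
  so the d^2 error terms add up to at most d^(5/2) \<tau>^L. The trace is real because a
  completely positive map commutes with taking adjoints.

  Since the trace norm is defined through the positive semidefinite square root of A^* A, its
  elementary properties need the spectral theorem for Hermitian matrices and the uniqueness of
  positive square roots: ||A||_1 is the sum of the singular values s_i, and the s_i^2 add up to
  the squared Frobenius norm, whence |A_ij| \<le> ||A||_1 \<le> sqrt n ||A||_F.
\<close>

section \<open>Adjoints and traces\<close>

abbreviation adj :: "complex mat \<Rightarrow> complex mat" where "adj \<equiv> cmat_adjoint"

lemma adjoint_carrier[simp]: "A \<in> carrier_mat n m \<Longrightarrow> adj A \<in> carrier_mat m n"
  by (auto simp: cmat_adjoint_def)

lemma adjoint_dim[simp]: "dim_row (adj A) = dim_col A" "dim_col (adj A) = dim_row A"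
  by (auto simp: cmat_adjoint_def)

lemma adjoint_index[simp]:
  "i < dim_col A \<Longrightarrow> j < dim_row A \<Longrightarrow> adj A $$ (i,j) = cnj (A $$ (j,i))"
  by (auto simp: cmat_adjoint_def)

lemma adjoint_adjoint[simp]: "adj (adj A) = A"
  by (rule eq_matI) auto

lemma adjoint_one[simp]: "adj (1\<^sub>m n) = 1\<^sub>m n"
  by (rule eq_matI) auto

lemma adjoint_mult:
  assumes "A \<in> carrier_mat n k" "B \<in> carrier_mat k m"
  shows "adj (A * B) = adj B * adj A"
  by (rule eq_matI)
     (use assms in \<open>auto simp: scalar_prod_def row_def col_def cnj_sum mult.commute\<close>)

lemma adjoint_minus:
  "A \<in> carrier_mat n m \<Longrightarrow> B \<in> carrier_mat n m \<Longrightarrow> adj (A - B) = adj A - adj B"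
  by (rule eq_matI) auto

lemma adjoint_matrix_unit: "adj (matrix_unit d a b) = matrix_unit d b a"
  by (rule eq_matI) (auto simp: matrix_unit_def)

lemma cscalar_prod_sum:
  fixes v w :: "complex vec"
  shows "v \<in> carrier_vec n \<Longrightarrow> w \<in> carrier_vec n \<Longrightarrow> conjugate v \<bullet> w = (\<Sum>i<n. cnj (v$i) * w$i)"
  by (auto simp: scalar_prod_def atLeast0LessThan)

lemma cnj_cscalar_prod:
  fixes v w :: "complex vec"
  shows "v \<in> carrier_vec n \<Longrightarrow> w \<in> carrier_vec n \<Longrightarrow> cnj (conjugate v \<bullet> w) = conjugate w \<bullet> v"
  by (simp add: cscalar_prod_sum cnj_sum mult.commute)

lemma cscalar_prod_adjoint:
  assumes A: "A \<in> carrier_mat n m" and v: "v \<in> carrier_vec n" and w: "w \<in> carrier_vec m"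
  shows "conjugate v \<bullet> (A *\<^sub>v w) = conjugate (adj A *\<^sub>v v) \<bullet> w"
proof -
  have "conjugate v \<bullet> (A *\<^sub>v w) = (\<Sum>i<n. cnj (v$i) * (\<Sum>j<m. A$$(i,j) * w$j))"
    using A v w by (auto simp: scalar_prod_def mult_mat_vec_def row_def atLeast0LessThan)
  also have "\<dots> = (\<Sum>j<m. (\<Sum>i<n. cnj (v$i) * A$$(i,j)) * w$j)"
    by (simp add: sum_distrib_left sum_distrib_right mult.assoc) (rule sum.swap)
  also have "\<dots> = conjugate (adj A *\<^sub>v v) \<bullet> w"
    using A v w by (auto simp: scalar_prod_def mult_mat_vec_def row_def atLeast0LessThan cnj_sum
        mult.commute intro!: sum.cong)
  finally show ?thesis .
qed

lemma cscalar_prod_hermitian: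
  "A \<in> carrier_mat n n \<Longrightarrow> adj A = A \<Longrightarrow> v \<in> carrier_vec n \<Longrightarrow> w \<in> carrier_vec n \<Longrightarrow>
   conjugate v \<bullet> (A *\<^sub>v w) = conjugate (A *\<^sub>v v) \<bullet> w"
  using cscalar_prod_adjoint[of A n n v w] by simp

lemma complex_of_real_cmod_square: "(complex_of_real (cmod z))\<^sup>2 = z * cnj z"
  by (metis complex_norm_square of_real_power)

lemma cscalar_prod_self:
  fixes v :: "complex vec"
  shows "v \<in> carrier_vec n \<Longrightarrow> conjugate v \<bullet> v = of_real (\<Sum>i<n. (cmod (v$i))\<^sup>2)"
  by (simp add: cscalar_prod_sum complex_of_real_cmod_square mult.commute)

lemma cscalar_prod_self_eq_0_iff:
  fixes v :: "complex vec"
  assumes v: "v \<in> carrier_vec n"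
  shows "conjugate v \<bullet> v = 0 \<longleftrightarrow> v = 0\<^sub>v n"
proof
  assume "conjugate v \<bullet> v = 0"
  then have "(\<Sum>i<n. (cmod (v$i))\<^sup>2) = 0"
    unfolding cscalar_prod_self[OF v] of_real_eq_0_iff .
  then have "\<forall>i<n. (cmod (v$i))\<^sup>2 = 0" by (subst (asm) sum_nonneg_eq_0_iff) auto
  then show "v = 0\<^sub>v n" using v by (intro eq_vecI) auto
qed auto

lemma complex_nonneg_iff: "(0::complex) \<le> z \<longleftrightarrow> Im z = 0 \<and> Re z \<ge> 0"
  by (auto simp: less_eq_complex_def)

lemma complex_of_real_nonneg_iff[simp]: "(0::complex) \<le> complex_of_real r \<longleftrightarrow> 0 \<le> r"
  by (simp add: complex_nonneg_iff)

lemma trace_mult_comm: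
  assumes "A \<in> carrier_mat n m" "B \<in> carrier_mat m n"
  shows "cmat_trace (A * B) = cmat_trace (B * A)"
proof -
  have "cmat_trace (A * B) = (\<Sum>i<n. \<Sum>k<m. A$$(i,k) * B$$(k,i))"
    using assms by (auto simp: cmat_trace_def scalar_prod_def row_def col_def atLeast0LessThan)
  also have "\<dots> = (\<Sum>k<m. \<Sum>i<n. B$$(k,i) * A$$(i,k))"
    by (subst sum.swap) (simp add: mult.commute)
  also have "\<dots> = cmat_trace (B * A)"
    using assms by (auto simp: cmat_trace_def scalar_prod_def row_def col_def atLeast0LessThan)
  finally show ?thesis .
qed

lemma trace_minus:
  "A \<in> carrier_mat n n \<Longrightarrow> B \<in> carrier_mat n n \<Longrightarrow> cmat_trace (A - B) = cmat_trace A - cmat_trace B"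
  by (auto simp: cmat_trace_def sum_subtractf)

lemma trace_one: "cmat_trace (1\<^sub>m n) = of_nat n"
  by (auto simp: cmat_trace_def)

definition frobenius_norm_sq :: "complex mat \<Rightarrow> real" where
  "frobenius_norm_sq A = (\<Sum>j<dim_col A. \<Sum>i<dim_row A. (cmod (A $$ (i,j)))\<^sup>2)"

lemma trace_adjoint_mult_self:
  "A \<in> carrier_mat n m \<Longrightarrow> cmat_trace (adj A * A) = of_real (frobenius_norm_sq A)"
  by (auto simp: cmat_trace_def frobenius_norm_sq_def scalar_prod_def row_def col_def
      atLeast0LessThan mult.commute complex_of_real_cmod_square intro!: sum.cong)

section \<open>Spectral theorem for Hermitian matrices\<close>

lemma frobenius_norm_sq_eq_0_iff:
  assumes A: "A \<in> carrier_mat n m"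
  shows "frobenius_norm_sq A = 0 \<longleftrightarrow> A = 0\<^sub>m n m"
proof
  assume "frobenius_norm_sq A = 0"
  then have "(\<Sum>j<m. \<Sum>i<n. (cmod (A $$ (i,j)))\<^sup>2) = 0"
    using A by (simp add: frobenius_norm_sq_def)
  then have "\<forall>j<m. \<forall>i<n. (cmod (A $$ (i,j)))\<^sup>2 = 0"
    by (simp add: sum_nonneg_eq_0_iff sum_nonneg)
  then show "A = 0\<^sub>m n m" using A by (intro eq_matI) auto
qed (auto simp: frobenius_norm_sq_def)

lemma trace_similar:
  assumes "similar_mat_wit A B P Q"
  shows "cmat_trace A = cmat_trace B"
proof -
  note sim = similar_mat_witD[OF refl assms]
  have "cmat_trace A = cmat_trace (P * (B * Q))" using sim(3) assoc_mult_mat[OF sim(6,5,7)] by simp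
  also have "\<dots> = cmat_trace ((B * Q) * P)" by (rule trace_mult_comm[OF sim(6)]) (use sim(5,7) in simp)
  also have "(B * Q) * P = B * (Q * P)" by (rule assoc_mult_mat[OF sim(5,7,6)])
  finally show ?thesis using sim(2,5) by simp
qed

lemma similar_mat_wit_square:
  assumes "similar_mat_wit A B P Q"
  shows "similar_mat_wit (A * A) (B * B) P Q"
proof -
  define n where "n = dim_row A"
  note sim = similar_mat_witD[OF n_def assms]
  have "A * A = P * B * (Q * P) * B * Q"
    using sim(3-7) by (simp add: assoc_mult_mat[of _ n n _ n _ n])
  also have "\<dots> = P * (B * B) * Q"
    using sim(2,5-7) by (simp add: assoc_mult_mat[of _ n n _ n _ n])
  finally show ?thesis by (intro similar_mat_witI[OF sim(1,2)]) (use sim(4-7) in auto)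
qed

lemma trace_square_strictly_upper_triangular:
  assumes B: "B \<in> carrier_mat n n" and ut: "upper_triangular B" and diag: "\<forall>i<n. B $$ (i,i) = 0"
  shows "cmat_trace (B * B) = 0"
proof -
  have "cmat_trace (B * B) = (\<Sum>i<n. \<Sum>k<n. B $$ (i,k) * B $$ (k,i))"
    using B by (auto simp: cmat_trace_def scalar_prod_def row_def col_def atLeast0LessThan)
  also have "\<dots> = 0"
  proof (intro sum.neutral ballI)
    fix i k assume "i \<in> {..<n}" "k \<in> {..<n}"
    then show "B $$ (i,k) * B $$ (k,i) = 0"
      using ut B diag by (cases "k < i"; cases "i < k") (auto simp: upper_triangular_def)
  qed
  finally show ?thesis .
qed

lemma hermitian_quadratic_form_real:
  assumes "A \<in> carrier_mat n n" "adj A = A" "v \<in> carrier_vec n"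
  shows "cnj (conjugate v \<bullet> (A *\<^sub>v v)) = conjugate v \<bullet> (A *\<^sub>v v)"
  using assms cnj_cscalar_prod[of v n "A *\<^sub>v v"] cscalar_prod_hermitian[of A n v v] by simp

lemma hermitian_eigenvalue_real:
  assumes A: "A \<in> carrier_mat n n" "adj A = A" and v: "v \<in> carrier_vec n" "v \<noteq> 0\<^sub>v n"
    and ev: "A *\<^sub>v v = \<mu> \<cdot>\<^sub>v v"
  shows "cnj \<mu> = \<mu>"
proof -
  have vv: "cnj (conjugate v \<bullet> v) = conjugate v \<bullet> v" "conjugate v \<bullet> v \<noteq> 0"
    using v cnj_cscalar_prod cscalar_prod_self_eq_0_iff by blast+
  have "conjugate v \<bullet> (A *\<^sub>v v) = \<mu> * (conjugate v \<bullet> v)" using ev v by simp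
  then have "cnj \<mu> * (conjugate v \<bullet> v) = \<mu> * (conjugate v \<bullet> v)"
    using hermitian_quadratic_form_real[OF A v(1)] vv(1) by (metis complex_cnj_mult)
  then show ?thesis using vv(2) by simp
qed

text \<open>If every eigenvalue vanished, \<open>A\<close> would be similar to a strictly upper triangular matrix
  (Schur), so \<open>Tr (A\<^sup>* A) = Tr (A A) = 0\<close>.\<close>

lemma hermitian_nonzero_eigenvalue:
  assumes A: "A \<in> carrier_mat n n" and herm: "adj A = A" and nz: "A \<noteq> 0\<^sub>m n n"
  shows "\<exists>\<mu> v. \<mu> \<noteq> 0 \<and> v \<in> carrier_vec n \<and> v \<noteq> 0\<^sub>v n \<and> A *\<^sub>v v = \<mu> \<cdot>\<^sub>v v"
proof (rule ccontr)
  assume no_ev: "\<not> ?thesis"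
  obtain es where cp: "char_poly A = (\<Prod>a\<leftarrow>es. [:- a, 1:])" and len: "length es = n"
    using char_poly_factorized[OF A] by blast
  obtain B P Q where "schur_decomposition A es = (B,P,Q)" by (metis prod_cases3)
  from schur_decomposition[OF A cp this] have sim: "similar_mat_wit A B P Q"
    and ut: "upper_triangular B" and dg: "diag_mat B = es" by auto
  have B: "B \<in> carrier_mat n n" using similar_mat_witD2[OF A sim] by auto
  have eigenvalues_zero: "e = 0" if e: "e \<in> set es" for e
  proof -
    have "poly (char_poly A) e = 0"
      unfolding cp poly_prod_list using e by (auto simp: prod_list_zero_iff)
    then have "eigenvalue A e" using eigenvalue_root_char_poly[OF A] by simp
    then show "e = 0" using no_ev A unfolding eigenvalue_def eigenvector_def by auto
  qed
  have "\<forall>i<n. B $$ (i,i) = 0"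
  proof (intro allI impI)
    fix i assume "i < n"
    then have "B $$ (i,i) \<in> set es" using dg B len unfolding diag_mat_def by auto
    then show "B $$ (i,i) = 0" by (rule eigenvalues_zero)
  qed
  then have "cmat_trace (B * B) = 0" using trace_square_strictly_upper_triangular[OF B ut] by blast
  then have "cmat_trace (adj A * A) = 0"
    using trace_similar[OF similar_mat_wit_square[OF sim]] herm by simp
  then have "A = 0\<^sub>m n n"
    using trace_adjoint_mult_self[OF A] frobenius_norm_sq_eq_0_iff[OF A] by simp
  with nz show False ..
qed

lemma zero_mult_mat_vec: "v \<in> carrier_vec m \<Longrightarrow> 0\<^sub>m n m *\<^sub>v v = 0\<^sub>v n"
  by (rule eq_vecI) (auto simp: scalar_prod_def)

lemma mult_mat_vec_zero: "U \<in> carrier_mat n k \<Longrightarrow> U *\<^sub>v 0\<^sub>v k = 0\<^sub>v n"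
  by (rule eq_vecI) (auto simp: scalar_prod_def)

lemma smult_zero_vec: "c \<cdot>\<^sub>v 0\<^sub>v n = (0\<^sub>v n :: complex vec)"
  by (rule eq_vecI) auto

lemma smult_vec_eq_0_iff:
  fixes z :: "complex vec"
  assumes "z \<in> carrier_vec k" "c \<noteq> 0"
  shows "c \<cdot>\<^sub>v z = 0\<^sub>v k \<longleftrightarrow> z = 0\<^sub>v k"
proof
  assume cz: "c \<cdot>\<^sub>v z = 0\<^sub>v k"
  show "z = 0\<^sub>v k"
  proof (rule eq_vecI)
    fix i assume "i < dim_vec (0\<^sub>v k :: complex vec)"
    then have "c * z $ i = 0" using assms arg_cong[OF cz, of "\<lambda>x. x $ i"] by simp
    then show "z $ i = 0\<^sub>v k $ i" using assms \<open>i < dim_vec (0\<^sub>v k)\<close> by simp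
  qed (use assms in auto)
qed (simp add: smult_zero_vec)

lemma index_mult_mat_sum:
  "X \<in> carrier_mat n a \<Longrightarrow> Y \<in> carrier_mat a b \<Longrightarrow> i < n \<Longrightarrow> j < b \<Longrightarrow>
   (X * Y) $$ (i,j) = (\<Sum>m<a. X $$ (i,m) * Y $$ (m,j))"
  by (simp add: scalar_prod_def row_def col_def atLeast0LessThan)

lemma index_adjoint_mult_sum:
  "X \<in> carrier_mat n a \<Longrightarrow> Y \<in> carrier_mat n b \<Longrightarrow> i < a \<Longrightarrow> j < b \<Longrightarrow>
   (adj X * Y) $$ (i,j) = (\<Sum>m<n. cnj (X $$ (m,i)) * Y $$ (m,j))"
  by (simp add: scalar_prod_def row_def col_def atLeast0LessThan)

lemma index_mult_mat_vec_sum: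
  "X \<in> carrier_mat n a \<Longrightarrow> v \<in> carrier_vec a \<Longrightarrow> i < n \<Longrightarrow>
   (X *\<^sub>v v) $ i = (\<Sum>m<a. X $$ (i,m) * v $ m)"
  by (simp add: scalar_prod_def row_def atLeast0LessThan)

lemma dim_mat_diag[simp]: "dim_row (mat_diag n f) = n" "dim_col (mat_diag n f) = n"
  by (simp_all add: mat_diag_def)

lemma index_mult_mat_diag:
  "X \<in> carrier_mat n k \<Longrightarrow> i < n \<Longrightarrow> j < k \<Longrightarrow> (X * mat_diag k l) $$ (i,j) = X $$ (i,j) * l j"
  by (simp add: mat_diag_mult_right)

lemma index_mat_diag_mult_vec:
  assumes "y \<in> carrier_vec k" "i < k"
  shows "(mat_diag k f *\<^sub>v y) $ i = f i * y $ i"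
proof -
  have "(mat_diag k f *\<^sub>v y) $ i = (\<Sum>j<k. (if i = j then f j else 0) * y $ j)"
    using assms by (simp add: mat_diag_def scalar_prod_def row_def atLeast0LessThan)
  also have "\<dots> = (\<Sum>j<k. if i = j then f i * y $ i else 0)" by (rule sum.cong) auto
  finally show ?thesis using assms by simp
qed

definition complement_projector :: "complex mat \<Rightarrow> complex mat" where
  "complement_projector U = 1\<^sub>m (dim_row U) - U * adj U"

lemma complement_projector_carrier: "U \<in> carrier_mat n k \<Longrightarrow> complement_projector U \<in> carrier_mat n n"
  by (simp add: complement_projector_def minus_carrier_mat)

lemma adjoint_complement_projector:
  "U \<in> carrier_mat n k \<Longrightarrow> adj (complement_projector U) = complement_projector U"
  using adjoint_minus[of "1\<^sub>m n" n n "U * adj U"] adjoint_mult[of U n k "adj U" n]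
  by (simp add: complement_projector_def)

lemma adjoint_mult_complement_projector:
  assumes U: "U \<in> carrier_mat n k" and UU: "adj U * U = 1\<^sub>m k"
  shows "adj U * complement_projector U = 0\<^sub>m k n"
proof -
  have Ua: "adj U \<in> carrier_mat k n" using U by simp
  have "adj U * complement_projector U = adj U * 1\<^sub>m n - adj U * (U * adj U)"
    unfolding complement_projector_def using U mult_minus_distrib_mat[OF Ua one_carrier_mat, of "U * adj U"] by simp
  also have "adj U * 1\<^sub>m n = adj U" using right_mult_one_mat[OF Ua] .
  also have "adj U * (U * adj U) = adj U" using U UU by (simp add: assoc_mult_mat[OF Ua U Ua, symmetric])
  finally show ?thesis using Ua by (intro eq_matI) auto
qed

lemma complement_projector_fixes:
  assumes U: "U \<in> carrier_mat n k" and x: "x \<in> carrier_vec n" and z: "adj U *\<^sub>v x = 0\<^sub>v k"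
  shows "complement_projector U *\<^sub>v x = x"
proof -
  have Ua: "adj U \<in> carrier_mat k n" using U by simp
  show ?thesis
    unfolding complement_projector_def using minus_mult_distrib_mat_vec[OF one_carrier_mat _ x, of "U * adj U"]
      assoc_mult_mat_vec[OF U Ua x] z mult_mat_vec_zero[OF U] U x by simp
qed

lemma trace_complement_projector:
  assumes U: "U \<in> carrier_mat n k" and UU: "adj U * U = 1\<^sub>m k"
  shows "cmat_trace (complement_projector U) = of_nat n - of_nat k"
  unfolding complement_projector_def
  using trace_minus[of "1\<^sub>m n" n "U * adj U"] U trace_one trace_mult_comm[OF U adjoint_carrier[OF U]] UU
  by simp

lemma hermitian_orthocomplement_invariant:
  assumes A: "A \<in> carrier_mat n n" and herm: "adj A = A" and U: "U \<in> carrier_mat n k"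
    and AU: "A * U = U * mat_diag k l" and x: "x \<in> carrier_vec n" and z: "adj U *\<^sub>v x = 0\<^sub>v k"
  shows "adj U *\<^sub>v (A *\<^sub>v x) = 0\<^sub>v k"
proof -
  have Ua: "adj U \<in> carrier_mat k n" using U by simp
  have UA: "adj U * A = adj (mat_diag k l) * adj U"
    using adjoint_mult[OF A U] adjoint_mult[OF U mat_diag_dim] AU herm by metis
  have "adj U *\<^sub>v (A *\<^sub>v x) = (adj U * A) *\<^sub>v x" using A Ua x by (simp add: assoc_mult_mat_vec)
  also have "\<dots> = adj (mat_diag k l) *\<^sub>v (adj U *\<^sub>v x)" unfolding UA using Ua x
    by (simp add: assoc_mult_mat_vec[of _ k k _ n])
  finally show ?thesis unfolding z by (simp add: mult_mat_vec_zero)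
qed

text \<open>
  The eigenvector is taken from the compression \<open>\<Pi> A \<Pi>\<close>, \<open>\<Pi> = 1 - U U\<^sup>*\<close>: for a nonzero
  eigenvalue it lies in the range of \<open>\<Pi>\<close>; if the compression vanishes, any nonzero column of
  \<open>\<Pi>\<close> will do.
\<close>

lemma hermitian_eigenvector_orthogonal_to_eigenvectors:
  assumes A: "A \<in> carrier_mat n n" and herm: "adj A = A" and U: "U \<in> carrier_mat n k"
    and UU: "adj U * U = 1\<^sub>m k" and AU: "A * U = U * mat_diag k l" and kn: "k < n"
  shows "\<exists>w \<mu>. w \<in> carrier_vec n \<and> w \<noteq> 0\<^sub>v n \<and> adj U *\<^sub>v w = 0\<^sub>v k \<and> A *\<^sub>v w = \<mu> \<cdot>\<^sub>v w"
proof -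
  have Ua: "adj U \<in> carrier_mat k n" using U by simp
  define Pi where "Pi = complement_projector U"
  have Pi: "Pi \<in> carrier_mat n n" unfolding Pi_def using complement_projector_carrier[OF U] .
  note Pi_fix = complement_projector_fixes[OF U, folded Pi_def]
  have UPi: "adj U * Pi = 0\<^sub>m k n" unfolding Pi_def using adjoint_mult_complement_projector[OF U UU] .
  define M where "M = Pi * A * Pi"
  have M: "M \<in> carrier_mat n n" using Pi A unfolding M_def by simp
  have herm_M: "adj M = M"
    unfolding M_def using adjoint_mult[of "Pi * A" n n Pi n] adjoint_mult[OF Pi A] Pi A herm
      adjoint_complement_projector[OF U, folded Pi_def] by (simp add: assoc_mult_mat[of _ n n _ n _ n])
  have M_vec: "M *\<^sub>v x = Pi *\<^sub>v (A *\<^sub>v (Pi *\<^sub>v x))" if x: "x \<in> carrier_vec n" for x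
    unfolding M_def using Pi A x by (simp add: assoc_mult_mat_vec[of _ n n _ n])
  have M_eq_A: "M *\<^sub>v x = A *\<^sub>v x" if x: "x \<in> carrier_vec n" and z: "adj U *\<^sub>v x = 0\<^sub>v k" for x
    using M_vec[OF x] Pi_fix[OF x z] Pi_fix[OF _ hermitian_orthocomplement_invariant[OF A herm U AU x z]] A x
    by simp
  show ?thesis
  proof (cases "M = 0\<^sub>m n n")
    case False
    then obtain \<mu> v where mu: "\<mu> \<noteq> 0" and v: "v \<in> carrier_vec n" "v \<noteq> 0\<^sub>v n"
      and ev: "M *\<^sub>v v = \<mu> \<cdot>\<^sub>v v"
      using hermitian_nonzero_eigenvalue[OF M herm_M] by blast
    have "\<mu> \<cdot>\<^sub>v (adj U *\<^sub>v v) = adj U *\<^sub>v (M *\<^sub>v v)" using ev Ua v by (simp add: mult_mat_vec)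
    also have "\<dots> = 0\<^sub>v k"
      using M_vec[OF v(1)] assoc_mult_mat_vec[OF Ua Pi, of "A *\<^sub>v (Pi *\<^sub>v v)"] UPi
        zero_mult_mat_vec[of "A *\<^sub>v (Pi *\<^sub>v v)" n k] A Pi v by simp
    finally have z: "adj U *\<^sub>v v = 0\<^sub>v k" using smult_vec_eq_0_iff[of "adj U *\<^sub>v v" k \<mu>] mu Ua v by simp
    then show ?thesis using v ev M_eq_A[OF v(1) z] by metis
  next
    case True
    have "Pi \<noteq> 0\<^sub>m n n"
      using trace_complement_projector[OF U UU, folded Pi_def] kn by (auto simp: cmat_trace_def)
    then obtain i j where ij: "i < n" "j < n" "Pi $$ (i,j) \<noteq> 0"
      using Pi by (metis (no_types, lifting) carrier_matD(1,2) eq_matI index_zero_mat(1,2,3))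
    define w where "w = col Pi j"
    have w: "w \<in> carrier_vec n" using Pi ij unfolding w_def by simp
    have "w $ i \<noteq> 0" unfolding w_def using Pi ij by simp
    then have "w \<noteq> 0\<^sub>v n" using ij by auto
    moreover have z: "adj U *\<^sub>v w = 0\<^sub>v k"
      unfolding w_def using col_mult2[OF Ua Pi ij(2)] UPi ij(2) by (metis col_zero index_zero_mat(3))
    moreover have "A *\<^sub>v w = 0 \<cdot>\<^sub>v w"
    proof -
      have "A *\<^sub>v w = 0\<^sub>v n" using M_eq_A[OF w z] True zero_mult_mat_vec[OF w] by simp
      then show ?thesis using w by (intro eq_vecI) auto
    qed
    ultimately show ?thesis using w by blast
  qed
qed

lemma exists_unit_multiple:
  fixes w :: "complex vec"
  assumes w: "w \<in> carrier_vec n" "w \<noteq> 0\<^sub>v n"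
  shows "\<exists>c. conjugate (c \<cdot>\<^sub>v w) \<bullet> (c \<cdot>\<^sub>v w) = 1"
proof -
  define r where "r = (\<Sum>i<n. (cmod (w$i))\<^sup>2)"
  have wr: "conjugate w \<bullet> w = of_real r" unfolding r_def using cscalar_prod_self[OF w(1)] .
  have "r \<ge> 0" unfolding r_def by (simp add: sum_nonneg)
  moreover have "r \<noteq> 0" using wr cscalar_prod_self_eq_0_iff[OF w(1)] w(2) by auto
  ultimately have "r > 0" by simp
  then have "conjugate (complex_of_real (1 / sqrt r) \<cdot>\<^sub>v w) \<bullet> (complex_of_real (1 / sqrt r) \<cdot>\<^sub>v w) = 1"
    using w by (simp add: conjugate_smult_vec wr flip: of_real_mult)
  then show ?thesis ..
qed

definition append_col :: "complex mat \<Rightarrow> complex vec \<Rightarrow> complex mat" where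
  "append_col U u = mat (dim_row U) (Suc (dim_col U)) (\<lambda>(i,j). if j < dim_col U then U $$ (i,j) else u $ i)"

lemma dim_append_col[simp]:
  "dim_row (append_col U u) = dim_row U" "dim_col (append_col U u) = Suc (dim_col U)"
  by (simp_all add: append_col_def)

lemma append_col_carrier: "U \<in> carrier_mat n k \<Longrightarrow> append_col U u \<in> carrier_mat n (Suc k)"
  by (simp add: append_col_def)

lemma orthonormal_append_col:
  fixes u :: "complex vec"
  assumes U: "U \<in> carrier_mat n k" and UU: "adj U * U = 1\<^sub>m k"
    and u: "u \<in> carrier_vec n" and u1: "conjugate u \<bullet> u = 1" and z: "adj U *\<^sub>v u = 0\<^sub>v k"
  shows "adj (append_col U u) * append_col U u = 1\<^sub>m (Suc k)"
proof (rule eq_matI)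
  let ?V = "append_col U u"
  have V: "?V \<in> carrier_mat n (Suc k)" using append_col_carrier[OF U] .
  have V_index: "?V $$ (m,j) = (if j < k then U $$ (m,j) else u $ m)" if "m < n" "j < Suc k" for m j
    using U that by (simp add: append_col_def)
  have orth: "(\<Sum>m<n. cnj (U $$ (m,i)) * u $ m) = 0" if i: "i < k" for i
    using arg_cong[OF z, of "\<lambda>x. x $ i"] U u i by (simp add: scalar_prod_def row_def atLeast0LessThan)
  fix i j assume "i < dim_row (1\<^sub>m (Suc k))" "j < dim_col (1\<^sub>m (Suc k))"
  then have i: "i < Suc k" and j: "j < Suc k" by auto
  have "(adj ?V * ?V) $$ (i,j) = (\<Sum>m<n. cnj (?V $$ (m,i)) * ?V $$ (m,j))"
    using index_adjoint_mult_sum[OF V V i j] .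
  also have "\<dots> = 1\<^sub>m (Suc k) $$ (i,j)"
  proof (cases "i < k"; cases "j < k")
    assume "i < k" "j < k"
    then show ?thesis using UU index_adjoint_mult_sum[OF U U, of i j] by (simp add: V_index)
  next
    assume "i < k" "\<not> j < k"
    then show ?thesis using j orth by (simp add: V_index)
  next
    assume "\<not> i < k" "j < k"
    then have "(\<Sum>m<n. cnj (?V $$ (m,i)) * ?V $$ (m,j)) = cnj (\<Sum>m<n. cnj (U $$ (m,j)) * u $ m)"
      using i by (simp add: V_index cnj_sum mult.commute)
    then show ?thesis using orth \<open>j < k\<close> \<open>\<not> i < k\<close> i by simp
  next
    assume "\<not> i < k" "\<not> j < k"
    then show ?thesis using i j u u1 by (simp add: V_index cscalar_prod_sum[of _ n])
  qed
  finally show "(adj ?V * ?V) $$ (i,j) = 1\<^sub>m (Suc k) $$ (i,j)" .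
qed (use U in auto)

lemma eigenvectors_append_col:
  assumes A: "A \<in> carrier_mat n n" and U: "U \<in> carrier_mat n k" and AU: "A * U = U * mat_diag k l"
    and u: "u \<in> carrier_vec n" and ev: "A *\<^sub>v u = \<mu> \<cdot>\<^sub>v u"
  shows "A * append_col U u = append_col U u * mat_diag (Suc k) (l(k := \<mu>))"
proof (rule eq_matI)
  let ?V = "append_col U u"
  have V: "?V \<in> carrier_mat n (Suc k)" using append_col_carrier[OF U] .
  fix i j assume "i < dim_row (?V * mat_diag (Suc k) (l(k := \<mu>)))" "j < dim_col (?V * mat_diag (Suc k) (l(k := \<mu>)))"
  then have i: "i < n" and j: "j < Suc k" using V by auto
  have "(A * ?V) $$ (i,j) = (\<Sum>m<n. A $$ (i,m) * ?V $$ (m,j))" using index_mult_mat_sum[OF A V i j] .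
  also have "\<dots> = ?V $$ (i,j) * (l(k := \<mu>)) j"
  proof (cases "j < k")
    case True
    have "(\<Sum>m<n. A $$ (i,m) * ?V $$ (m,j)) = (A * U) $$ (i,j)"
      using index_mult_mat_sum[OF A U i True] U True by (simp add: append_col_def)
    then show ?thesis unfolding AU using index_mult_mat_diag[OF U i True] U True i
      by (simp add: append_col_def)
  next
    case False
    then have "j = k" using j by simp
    have "(\<Sum>m<n. A $$ (i,m) * ?V $$ (m,j)) = (A *\<^sub>v u) $ i"
      using index_mult_mat_vec_sum[OF A u i] U \<open>j = k\<close> by (simp add: append_col_def)
    then show ?thesis using ev i u U \<open>j = k\<close> by (simp add: append_col_def mult.commute)
  qed
  also have "\<dots> = (?V * mat_diag (Suc k) (l(k := \<mu>))) $$ (i,j)" using index_mult_mat_diag[OF V i j] by simp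
  finally show "(A * ?V) $$ (i,j) = (?V * mat_diag (Suc k) (l(k := \<mu>))) $$ (i,j)" .
qed (use U A in auto)

lemma hermitian_orthonormal_eigenvectors:
  assumes A: "A \<in> carrier_mat n n" and herm: "adj A = A" and "k \<le> n"
  shows "\<exists>U l. U \<in> carrier_mat n k \<and> adj U * U = 1\<^sub>m k \<and> A * U = U * mat_diag k l"
  using \<open>k \<le> n\<close>
proof (induction k)
  case 0
  have "adj (0\<^sub>m n 0) * 0\<^sub>m n 0 = 1\<^sub>m 0" by (rule eq_matI) auto
  moreover have "A * 0\<^sub>m n 0 = 0\<^sub>m n 0 * mat_diag 0 (\<lambda>_. 0)" using A by (intro eq_matI) auto
  ultimately show ?case by (metis zero_carrier_mat)
next
  case (Suc k)
  then obtain U l where U: "U \<in> carrier_mat n k" and UU: "adj U * U = 1\<^sub>m k"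
    and AU: "A * U = U * mat_diag k l" by auto
  obtain w \<mu> where w: "w \<in> carrier_vec n" "w \<noteq> 0\<^sub>v n" and z: "adj U *\<^sub>v w = 0\<^sub>v k"
    and ev: "A *\<^sub>v w = \<mu> \<cdot>\<^sub>v w"
    using hermitian_eigenvector_orthogonal_to_eigenvectors[OF A herm U UU AU] Suc.prems by auto
  obtain c where u1: "conjugate (c \<cdot>\<^sub>v w) \<bullet> (c \<cdot>\<^sub>v w) = 1" using exists_unit_multiple[OF w] ..
  have "adj U *\<^sub>v (c \<cdot>\<^sub>v w) = 0\<^sub>v k" using adjoint_carrier[OF U] w z by (simp add: mult_mat_vec smult_zero_vec)
  moreover have "A *\<^sub>v (c \<cdot>\<^sub>v w) = \<mu> \<cdot>\<^sub>v (c \<cdot>\<^sub>v w)"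
    using A w ev by (simp add: mult_mat_vec smult_smult_assoc mult.commute)
  ultimately show ?case
    using append_col_carrier[OF U] orthonormal_append_col[OF U UU _ u1] eigenvectors_append_col[OF A U AU]
      w by (meson smult_carrier_vec)
qed

lemma hermitian_unitary_diagonalization:
  assumes A: "A \<in> carrier_mat n n" and herm: "adj A = A"
  obtains U l where "U \<in> carrier_mat n n" "adj U * U = 1\<^sub>m n" "U * adj U = 1\<^sub>m n"
    "A * U = U * mat_diag n l" "A = U * mat_diag n l * adj U"
proof -
  obtain U l where U: "U \<in> carrier_mat n n" and UU: "adj U * U = 1\<^sub>m n"
    and AU: "A * U = U * mat_diag n l"
    using hermitian_orthonormal_eigenvectors[OF A herm, of n] by auto
  have UU': "U * adj U = 1\<^sub>m n" using mat_mult_left_right_inverse[OF adjoint_carrier[OF U] U UU] .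
  have "A = (A * U) * adj U" using UU' A U by (simp add: assoc_mult_mat[of _ n n _ n _ n])
  then show ?thesis using that U UU UU' AU by simp
qed

section \<open>Positive semidefinite square roots\<close>

lemma psd_quadratic_form_nonneg: "psd n A \<Longrightarrow> v \<in> carrier_vec n \<Longrightarrow> conjugate v \<bullet> (A *\<^sub>v v) \<ge> 0"
  unfolding psd_def by auto

lemma linear_coeff_zero_if_quadratic_nonneg:
  fixes a b :: real
  assumes b: "b \<ge> 0" and q: "\<And>t. 2 * t * a + t\<^sup>2 * b \<ge> 0"
  shows "a = 0"
proof (rule ccontr)
  assume "a \<noteq> 0"
  define t where "t = - a / (b + 1)"
  have s: "t * (b + 1) = - a" unfolding t_def using b by simp
  have "(b + 1)\<^sup>2 * (2 * t * a + t\<^sup>2 * b) = 2 * a * (t * (b + 1)) * (b + 1) + (t * (b + 1))\<^sup>2 * b"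
    by (simp add: algebra_simps power2_eq_square)
  also have "\<dots> = - (a\<^sup>2 * (b + 2))" unfolding s by (simp add: algebra_simps power2_eq_square)
  finally have "(b + 1)\<^sup>2 * (2 * t * a + t\<^sup>2 * b) = - (a\<^sup>2 * (b + 2))" .
  moreover have "a\<^sup>2 * (b + 2) > 0" using \<open>a \<noteq> 0\<close> b by simp
  moreover have "(b + 1)\<^sup>2 * (2 * t * a + t\<^sup>2 * b) \<ge> 0" using q[of t] by simp
  ultimately show False by linarith
qed

text \<open>Along \<open>v + t P v\<close> the quadratic form is \<open>2 t \<parallel>P v\<parallel>\<^sup>2 + t\<^sup>2 \<langle>P v, P (P v)\<rangle>\<close>.\<close>

lemma psd_quadratic_form_eq_0_imp:
  assumes P: "psd n P" and v: "v \<in> carrier_vec n" and z: "conjugate v \<bullet> (P *\<^sub>v v) = 0"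
  shows "P *\<^sub>v v = 0\<^sub>v n"
proof -
  have Pc: "P \<in> carrier_mat n n" and herm: "adj P = P" using P by (auto simp: psd_def)
  define w where "w = P *\<^sub>v v"
  have w: "w \<in> carrier_vec n" using Pc v unfolding w_def by auto
  have Pw: "P *\<^sub>v w \<in> carrier_vec n" using Pc w by auto
  define a where "a = conjugate w \<bullet> w"
  define b where "b = conjugate w \<bullet> (P *\<^sub>v w)"
  have b0: "b \<ge> 0" unfolding b_def using psd_quadratic_form_nonneg[OF P w] .
  have a_real: "a = of_real (\<Sum>i<n. (cmod (w$i))\<^sup>2)" unfolding a_def using cscalar_prod_self[OF w] .
  have vPw: "conjugate v \<bullet> (P *\<^sub>v w) = a"
    unfolding a_def w_def using cscalar_prod_hermitian[OF Pc herm v] w w_def by auto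
  have "2 * t * Re a + t\<^sup>2 * Re b \<ge> 0" for t :: real
  proof -
    define u where "u = v + complex_of_real t \<cdot>\<^sub>v w"
    have u: "u \<in> carrier_vec n" using v w unfolding u_def by auto
    have "P *\<^sub>v u = w + complex_of_real t \<cdot>\<^sub>v (P *\<^sub>v w)"
      unfolding u_def w_def using Pc v w w_def by (simp add: mult_add_distrib_mat_vec mult_mat_vec)
    then have "conjugate u \<bullet> (P *\<^sub>v u) =
        conjugate v \<bullet> w + of_real t * (conjugate v \<bullet> (P *\<^sub>v w))
        + of_real t * (conjugate w \<bullet> w) + (of_real t)\<^sup>2 * (conjugate w \<bullet> (P *\<^sub>v w))"
      unfolding u_def using v w Pw
      by (simp add: conjugate_add_vec[of _ n] conjugate_smult_vec add_scalar_prod_distrib[of _ n]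
          scalar_prod_add_distrib[of _ n] smult_scalar_prod_distrib[of _ n]
          scalar_prod_smult_distrib[of _ n] algebra_simps power2_eq_square)
    also have "\<dots> = 2 * of_real t * a + (of_real t)\<^sup>2 * b"
      using z vPw unfolding w_def a_def b_def by simp
    finally have "0 \<le> 2 * of_real t * a + (of_real t)\<^sup>2 * b"
      using psd_quadratic_form_nonneg[OF P u] by simp
    then show ?thesis using b0 a_real by (simp add: complex_nonneg_iff power2_eq_square)
  qed
  then have "Re a = 0"
    using linear_coeff_zero_if_quadratic_nonneg[of "Re b" "Re a"] b0 by (simp add: complex_nonneg_iff)
  then have "a = 0" using a_real by simp
  then show ?thesis unfolding a_def w_def using cscalar_prod_self_eq_0_iff Pc v by (metis mult_mat_vec_carrier)
qed

text \<open>Comparing \<open>\<parallel>P v\<parallel>\<^sup>2 = \<langle>v, P\<^sup>2 v\<rangle> = \<langle>v, Q\<^sup>2 v\<rangle> = \<parallel>Q v\<parallel>\<^sup>2\<close> with \<open>P v = Q v + \<mu> v\<close>.\<close>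

lemma psd_equal_squares_eigenvector:
  assumes P: "psd n P" and Q: "psd n Q" and PQ: "P * P = Q * Q" and v: "v \<in> carrier_vec n"
    and ev: "(P - Q) *\<^sub>v v = \<mu> \<cdot>\<^sub>v v" and mu_real: "cnj \<mu> = \<mu>"
  shows "\<mu> * (conjugate v \<bullet> (P *\<^sub>v v) + conjugate v \<bullet> (Q *\<^sub>v v)) = 0"
proof -
  have Pc: "P \<in> carrier_mat n n" and herm_P: "adj P = P" using P by (auto simp: psd_def)
  have Qc: "Q \<in> carrier_mat n n" and herm_Q: "adj Q = Q" using Q by (auto simp: psd_def)
  define x where "x = P *\<^sub>v v"
  define y where "y = Q *\<^sub>v v"
  have x: "x \<in> carrier_vec n" and y: "y \<in> carrier_vec n" using Pc Qc v unfolding x_def y_def by auto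
  have "x - y = \<mu> \<cdot>\<^sub>v v"
    using ev Pc Qc v unfolding x_def y_def by (simp add: minus_mult_distrib_mat_vec)
  then have xy_index: "x $ i = y $ i + \<mu> * v $ i" if "i < n" for i
  proof -
    have "(x - y) $ i = (\<mu> \<cdot>\<^sub>v v) $ i" using \<open>x - y = \<mu> \<cdot>\<^sub>v v\<close> by simp
    then show ?thesis using that x y v by (simp add: algebra_simps)
  qed
  have x_eq: "x = y + \<mu> \<cdot>\<^sub>v v" by (rule eq_vecI) (use x y v xy_index in auto)
  have y_eq: "y = x - \<mu> \<cdot>\<^sub>v v" by (rule eq_vecI) (use x y v xy_index in auto)
  have "conjugate x \<bullet> x = conjugate v \<bullet> ((P * P) *\<^sub>v v)"
    using cscalar_prod_hermitian[OF Pc herm_P v x] Pc v unfolding x_def by (simp add: assoc_mult_mat_vec)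
  also have "\<dots> = conjugate y \<bullet> y"
    using cscalar_prod_hermitian[OF Qc herm_Q v y] Qc v unfolding PQ y_def by (simp add: assoc_mult_mat_vec)
  finally have "conjugate x \<bullet> x = conjugate y \<bullet> y" .
  moreover have "conjugate x \<bullet> x = conjugate y \<bullet> x + \<mu> * (conjugate v \<bullet> x)"
  proof -
    have "conjugate x = conjugate y + \<mu> \<cdot>\<^sub>v conjugate v"
      using x_eq y v mu_real by (simp add: conjugate_add_vec[of _ n] conjugate_smult_vec)
    then show ?thesis using x y v
      by (simp add: add_scalar_prod_distrib[of _ n] smult_scalar_prod_distrib[of _ n])
  qed
  moreover have "conjugate y \<bullet> y = conjugate y \<bullet> x - \<mu> * (conjugate v \<bullet> y)"
  proof -
    have "cnj (conjugate v \<bullet> y) = conjugate v \<bullet> y"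
      using psd_quadratic_form_nonneg[OF Q v] unfolding y_def by (simp add: complex_nonneg_iff complex_eq_iff)
    then have "conjugate y \<bullet> v = conjugate v \<bullet> y" using cnj_cscalar_prod[OF v y] by simp
    then show ?thesis using x y v by (subst (2) y_eq) (simp add: scalar_prod_minus_distrib[of _ n])
  qed
  ultimately show ?thesis unfolding x_def y_def by (simp add: algebra_simps)
qed

lemma psd_sqrt_unique:
  assumes P: "psd n P" and Q: "psd n Q" and PQ: "P * P = Q * Q"
  shows "P = Q"
proof (rule ccontr)
  assume "P \<noteq> Q"
  have Pc: "P \<in> carrier_mat n n" and herm_P: "adj P = P" using P by (auto simp: psd_def)
  have Qc: "Q \<in> carrier_mat n n" and herm_Q: "adj Q = Q" using Q by (auto simp: psd_def)
  have D: "P - Q \<in> carrier_mat n n" using Pc Qc by auto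
  have herm_D: "adj (P - Q) = P - Q" using adjoint_minus[OF Pc Qc] herm_P herm_Q by simp
  have "P - Q \<noteq> 0\<^sub>m n n"
  proof
    assume "P - Q = 0\<^sub>m n n"
    have "P $$ (i,j) = Q $$ (i,j)" if "i < n" "j < n" for i j
    proof -
      have "(P - Q) $$ (i,j) = 0" using \<open>P - Q = 0\<^sub>m n n\<close> that by simp
      then show ?thesis using that Pc Qc by simp
    qed
    then show False using \<open>P \<noteq> Q\<close> Pc Qc by (metis carrier_matD eq_matI)
  qed
  then obtain \<mu> v where mu: "\<mu> \<noteq> 0" and v: "v \<in> carrier_vec n" "v \<noteq> 0\<^sub>v n"
    and ev: "(P - Q) *\<^sub>v v = \<mu> \<cdot>\<^sub>v v"
    using hermitian_nonzero_eigenvalue[OF D herm_D] by blast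
  have "\<mu> * (conjugate v \<bullet> (P *\<^sub>v v) + conjugate v \<bullet> (Q *\<^sub>v v)) = 0"
    using psd_equal_squares_eigenvector[OF P Q PQ v(1) ev hermitian_eigenvalue_real[OF D herm_D v ev]] .
  then have "conjugate v \<bullet> (P *\<^sub>v v) = 0" "conjugate v \<bullet> (Q *\<^sub>v v) = 0"
    using mu psd_quadratic_form_nonneg[OF P v(1)] psd_quadratic_form_nonneg[OF Q v(1)]
    by (auto simp: complex_nonneg_iff complex_eq_iff)
  then have "(P - Q) *\<^sub>v v = 0\<^sub>v n"
    using psd_quadratic_form_eq_0_imp[OF P v(1)] psd_quadratic_form_eq_0_imp[OF Q v(1)] Pc Qc v
    by (simp add: minus_mult_distrib_mat_vec)
  then show False using ev v mu smult_vec_eq_0_iff by metis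
qed

lemma psd_adjoint_mult_self:
  assumes A: "A \<in> carrier_mat n m"
  shows "psd m (adj A * A)"
proof -
  have Aa: "adj A \<in> carrier_mat m n" using A by simp
  have "conjugate v \<bullet> ((adj A * A) *\<^sub>v v) \<ge> 0" if v: "v \<in> carrier_vec m" for v
  proof -
    have Av: "A *\<^sub>v v \<in> carrier_vec n" using A v by simp
    have "conjugate v \<bullet> ((adj A * A) *\<^sub>v v) = conjugate (A *\<^sub>v v) \<bullet> (A *\<^sub>v v)"
      using assoc_mult_mat_vec[OF Aa A v] cscalar_prod_adjoint[OF Aa v Av] by simp
    also have "\<dots> = of_real (\<Sum>i<n. (cmod ((A *\<^sub>v v)$i))\<^sup>2)" using cscalar_prod_self[OF Av] .
    finally have eq: "conjugate v \<bullet> ((adj A * A) *\<^sub>v v) = of_real (\<Sum>i<n. (cmod ((A *\<^sub>v v)$i))\<^sup>2)" .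
    have "(\<Sum>i<n. (cmod ((A *\<^sub>v v)$i))\<^sup>2) \<ge> 0" by (simp add: sum_nonneg)
    then show ?thesis by (simp only: eq complex_of_real_nonneg_iff)
  qed
  moreover have "adj (adj A * A) = adj A * A" using adjoint_mult[OF Aa A] by simp
  ultimately show ?thesis unfolding psd_def using A by auto
qed

lemma psd_conj_nonneg_diag:
  assumes U: "U \<in> carrier_mat n k" and s: "\<forall>i<k. s i \<ge> 0"
  shows "psd n (U * mat_diag k (\<lambda>i. of_real (s i)) * adj U)"
proof -
  let ?S = "mat_diag k (\<lambda>i. complex_of_real (s i))"
  have Ua: "adj U \<in> carrier_mat k n" using U by simp
  have herm_S: "adj ?S = ?S" by (rule eq_matI) (auto simp: mat_diag_def)
  have "adj (U * ?S * adj U) = U * ?S * adj U"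
    using adjoint_mult[OF mult_carrier_mat[OF U mat_diag_dim] Ua] adjoint_mult[OF U mat_diag_dim] herm_S
      U by (simp add: assoc_mult_mat[OF U mat_diag_dim Ua])
  moreover have "conjugate v \<bullet> ((U * ?S * adj U) *\<^sub>v v) \<ge> 0" if v: "v \<in> carrier_vec n" for v
  proof -
    define y where "y = adj U *\<^sub>v v"
    have y: "y \<in> carrier_vec k" unfolding y_def using Ua v by simp
    have Sy: "?S *\<^sub>v y \<in> carrier_vec k" using mult_mat_vec_carrier[OF mat_diag_dim y] .
    have "conjugate v \<bullet> ((U * ?S * adj U) *\<^sub>v v) = conjugate v \<bullet> (U *\<^sub>v (?S *\<^sub>v y))"
      unfolding y_def using assoc_mult_mat_vec[OF mult_carrier_mat[OF U mat_diag_dim] Ua v]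
        assoc_mult_mat_vec[OF U mat_diag_dim] Ua v by simp
    also have "\<dots> = conjugate y \<bullet> (?S *\<^sub>v y)"
      unfolding y_def by (rule cscalar_prod_adjoint[OF U v]) (use Sy y_def in simp)
    also have "\<dots> = (\<Sum>i<k. cnj (y$i) * (?S *\<^sub>v y) $ i)" using y Sy by (rule cscalar_prod_sum)
    also have "\<dots> = (\<Sum>i<k. of_real (s i * (cmod (y$i))\<^sup>2))"
      by (intro sum.cong refl) (simp del: index_mult_mat_vec add: index_mat_diag_mult_vec[OF y]
          complex_of_real_cmod_square mult.commute mult.left_commute)
    also have "\<dots> = of_real (\<Sum>i<k. s i * (cmod (y$i))\<^sup>2)" by simp
    finally have eq: "conjugate v \<bullet> ((U * ?S * adj U) *\<^sub>v v) = of_real (\<Sum>i<k. s i * (cmod (y$i))\<^sup>2)" .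
    have "(\<Sum>i<k. s i * (cmod (y$i))\<^sup>2) \<ge> 0" using s by (intro sum_nonneg) auto
    then show ?thesis by (simp only: eq complex_of_real_nonneg_iff)
  qed
  ultimately show ?thesis unfolding psd_def using U by auto
qed

lemma unitary_conj_diag_mult:
  assumes U: "U \<in> carrier_mat n n" and UU: "adj U * U = 1\<^sub>m n"
  shows "(U * mat_diag n f * adj U) * (U * mat_diag n g * adj U) = U * mat_diag n (\<lambda>i. f i * g i) * adj U"
proof -
  let ?F = "mat_diag n f" and ?G = "mat_diag n g"
  have Ua: "adj U \<in> carrier_mat n n" using U by simp
  have UF: "U * ?F \<in> carrier_mat n n" and UGU: "U * ?G * adj U \<in> carrier_mat n n" using U by auto
  have "adj U * (U * ?G * adj U) = (adj U * U) * ?G * adj U"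
    using U Ua by (simp add: assoc_mult_mat[of _ n n _ n _ n])
  also have "\<dots> = ?G * adj U" using UU Ua by simp
  finally have "(U * ?F * adj U) * (U * ?G * adj U) = (U * ?F) * (?G * adj U)"
    using assoc_mult_mat[OF UF Ua UGU] by simp
  also have "\<dots> = U * (?F * ?G * adj U)"
    using assoc_mult_mat[OF U mat_diag_dim mult_carrier_mat[OF mat_diag_dim Ua]]
      assoc_mult_mat[OF mat_diag_dim mat_diag_dim Ua] by simp
  also have "\<dots> = U * (?F * ?G) * adj U"
    using assoc_mult_mat[OF U mult_carrier_mat[OF mat_diag_dim mat_diag_dim] Ua] by simp
  finally show ?thesis by simp
qed

lemma trace_unitary_conj_diag:
  assumes U: "U \<in> carrier_mat n n" and UU: "adj U * U = 1\<^sub>m n"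
  shows "cmat_trace (U * mat_diag n f * adj U) = (\<Sum>i<n. f i)"
proof -
  have Ua: "adj U \<in> carrier_mat n n" using U by simp
  have "cmat_trace (U * mat_diag n f * adj U) = cmat_trace (adj U * (U * mat_diag n f))"
    using trace_mult_comm[OF mult_carrier_mat[OF U mat_diag_dim] Ua] .
  also have "adj U * (U * mat_diag n f) = mat_diag n f"
    using assoc_mult_mat[OF Ua U mat_diag_dim, symmetric] UU by simp
  finally show ?thesis by (simp add: cmat_trace_def mat_diag_def)
qed

lemma psd_unitary_diagonalization:
  assumes H: "psd n H"
  obtains U s where "U \<in> carrier_mat n n" "adj U * U = 1\<^sub>m n" "\<forall>i<n. s i \<ge> 0"
    "H = U * mat_diag n (\<lambda>i. of_real (s i)) * adj U"
proof -
  have Hc: "H \<in> carrier_mat n n" and herm: "adj H = H" using H by (auto simp: psd_def)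
  obtain U l where U: "U \<in> carrier_mat n n" and UU: "adj U * U = 1\<^sub>m n" and "U * adj U = 1\<^sub>m n"
    and HU: "H * U = U * mat_diag n l" and H_eq: "H = U * mat_diag n l * adj U"
    by (rule hermitian_unitary_diagonalization[OF Hc herm])
  have l_nonneg: "l i \<ge> 0" if i: "i < n" for i
  proof -
    define u where "u = col U i"
    have u: "u \<in> carrier_vec n" unfolding u_def using U i by simp
    have "H *\<^sub>v u = col (U * mat_diag n l) i" unfolding u_def HU[symmetric] using col_mult2[OF Hc U i] ..
    also have "\<dots> = l i \<cdot>\<^sub>v u"
      unfolding u_def using U i by (intro eq_vecI) (simp_all add: mat_diag_mult_right[OF U] mult.commute)
    finally have Hu: "H *\<^sub>v u = l i \<cdot>\<^sub>v u" .
    have "conjugate u \<bullet> u = (adj U * U) $$ (i,i)"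
      using index_adjoint_mult_sum[OF U U i i] cscalar_prod_sum[OF u u] U i unfolding u_def by simp
    then have "conjugate u \<bullet> (H *\<^sub>v u) = l i"
      unfolding Hu using scalar_prod_smult_distrib[OF carrier_vec_conjugate[OF u] u] UU i by simp
    then show ?thesis using psd_quadratic_form_nonneg[OF H u] by simp
  qed
  have "mat_diag n l = mat_diag n (\<lambda>i. of_real (Re (l i)))"
    using l_nonneg by (intro eq_matI) (auto simp: mat_diag_def complex_nonneg_iff complex_eq_iff)
  moreover have "\<forall>i<n. Re (l i) \<ge> 0" using l_nonneg by (simp add: complex_nonneg_iff)
  ultimately show ?thesis using that U UU H_eq by metis
qed

section \<open>The trace norm\<close>

lemma trace_norm_singular_values:
  assumes A: "A \<in> carrier_mat n n"
  obtains s where "\<forall>i<n. s i \<ge> 0" "trace_norm A = (\<Sum>i<n. s i)" "(\<Sum>i<n. (s i)\<^sup>2) = frobenius_norm_sq A"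
proof -
  obtain U e where U: "U \<in> carrier_mat n n" and UU: "adj U * U = 1\<^sub>m n" and e: "\<forall>i<n. e i \<ge> 0"
    and AA: "adj A * A = U * mat_diag n (\<lambda>i. of_real (e i)) * adj U"
    by (rule psd_unitary_diagonalization[OF psd_adjoint_mult_self[OF A]])
  define s where "s i = sqrt (e i)" for i
  have s: "\<forall>i<n. s i \<ge> 0" using e unfolding s_def by simp
  define P where "P = U * mat_diag n (\<lambda>i. of_real (s i)) * adj U"
  have P: "psd n P" unfolding P_def using psd_conj_nonneg_diag[OF U s] .
  have "mat_diag n (\<lambda>i. complex_of_real (s i) * complex_of_real (s i)) = mat_diag n (\<lambda>i. of_real (e i))"
    using e by (intro eq_matI) (auto simp: mat_diag_def s_def simp flip: of_real_mult)
  then have PP: "P * P = adj A * A" unfolding P_def AA using unitary_conj_diag_mult[OF U UU] by simp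
  have "(THE Q. psd (dim_col A) Q \<and> Q * Q = adj A * A) = P"
  proof (rule the_equality)
    show "psd (dim_col A) P \<and> P * P = adj A * A" using P PP A by simp
    fix Q assume "psd (dim_col A) Q \<and> Q * Q = adj A * A"
    then show "Q = P" using psd_sqrt_unique[OF _ P, of Q] PP A by auto
  qed
  then have "trace_norm A = Re (cmat_trace P)" unfolding trace_norm_def by simp
  also have "\<dots> = (\<Sum>i<n. s i)" unfolding P_def trace_unitary_conj_diag[OF U UU] by simp
  finally have "trace_norm A = (\<Sum>i<n. s i)" .
  moreover have "(\<Sum>i<n. (s i)\<^sup>2) = (\<Sum>i<n. e i)" using e by (intro sum.cong) (auto simp: s_def)
  moreover have "(\<Sum>i<n. e i) = frobenius_norm_sq A"
  proof -
    have "cmat_trace (adj A * A) = (\<Sum>i<n. complex_of_real (e i))"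
      unfolding AA by (rule trace_unitary_conj_diag[OF U UU])
    then have "complex_of_real (\<Sum>i<n. e i) = of_real (frobenius_norm_sq A)"
      using trace_adjoint_mult_self[OF A] by simp
    then show ?thesis by (simp only: of_real_eq_iff)
  qed
  ultimately show ?thesis using that[OF s] by simp
qed

lemma trace_norm_nonneg:
  assumes "A \<in> carrier_mat n n"
  shows "trace_norm A \<ge> 0"
proof -
  obtain s where "\<forall>i<n. s i \<ge> 0" "trace_norm A = (\<Sum>i<n. s i)"
    using trace_norm_singular_values[OF assms] by blast
  then show ?thesis by (auto intro: sum_nonneg)
qed

lemma sum_squares_le_square_sum:
  fixes f :: "'a \<Rightarrow> real"
  assumes "finite I" "\<forall>i\<in>I. f i \<ge> 0"
  shows "(\<Sum>i\<in>I. (f i)\<^sup>2) \<le> (\<Sum>i\<in>I. f i)\<^sup>2"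
proof -
  have "(\<Sum>i\<in>I. f i * f i) \<le> (\<Sum>i\<in>I. f i * (\<Sum>j\<in>I. f j))"
    using assms by (intro sum_mono mult_left_mono) (auto intro: member_le_sum)
  then show ?thesis by (simp add: power2_eq_square sum_distrib_right)
qed

lemma norm_entry_le_trace_norm:
  assumes A: "A \<in> carrier_mat n n" and i: "i < n" and j: "j < n"
  shows "cmod (A $$ (i,j)) \<le> trace_norm A"
proof -
  obtain s where s: "\<forall>i<n. s i \<ge> 0" and tn: "trace_norm A = (\<Sum>i<n. s i)"
    and fro: "(\<Sum>i<n. (s i)\<^sup>2) = frobenius_norm_sq A"
    using trace_norm_singular_values[OF A] by blast
  have "(cmod (A $$ (i,j)))\<^sup>2 \<le> (\<Sum>k<n. (cmod (A $$ (k,j)))\<^sup>2)"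
    using i by (intro member_le_sum[where f = "\<lambda>k. (cmod (A $$ (k,j)))\<^sup>2"]) auto
  also have "\<dots> \<le> (\<Sum>j<n. \<Sum>k<n. (cmod (A $$ (k,j)))\<^sup>2)"
    using j by (intro member_le_sum[where f = "\<lambda>j. \<Sum>k<n. (cmod (A $$ (k,j)))\<^sup>2"]) (auto intro: sum_nonneg)
  also have "\<dots> = frobenius_norm_sq A" using A by (simp add: frobenius_norm_sq_def)
  also have "\<dots> \<le> (trace_norm A)\<^sup>2"
    unfolding fro[symmetric] tn using sum_squares_le_square_sum[of "{..<n}" s] s by simp
  finally show ?thesis using trace_norm_nonneg[OF A] by (meson norm_ge_zero power2_le_imp_le)
qed

lemma trace_norm_le_frobenius:
  assumes A: "A \<in> carrier_mat n n"
  shows "trace_norm A \<le> sqrt (real n) * sqrt (frobenius_norm_sq A)"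
proof -
  obtain s where "trace_norm A = (\<Sum>i<n. s i)" and fro: "(\<Sum>i<n. (s i)\<^sup>2) = frobenius_norm_sq A"
    using trace_norm_singular_values[OF A] by blast
  then have "(trace_norm A)\<^sup>2 \<le> frobenius_norm_sq A * real n"
    using sum_squared_le_sum_of_squares[of s "{..<n}"] by simp
  then have "sqrt ((trace_norm A)\<^sup>2) \<le> sqrt (frobenius_norm_sq A * real n)" by (rule real_sqrt_le_mono)
  then show ?thesis using trace_norm_nonneg[OF A] by (simp add: real_sqrt_mult mult.commute)
qed

lemma trace_norm_zero: "trace_norm (0\<^sub>m n n) = 0"
  using trace_norm_le_frobenius[of "0\<^sub>m n n" n] trace_norm_nonneg[of "0\<^sub>m n n" n]
  by (simp add: frobenius_norm_sq_def)

lemma trace_norm_pos: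
  assumes "A \<in> carrier_mat n n" "A \<noteq> 0\<^sub>m n n"
  shows "trace_norm A > 0"
proof -
  obtain i j where "i < n" "j < n" "A $$ (i,j) \<noteq> 0"
    using assms by (metis (no_types, lifting) carrier_matD(1,2) eq_matI index_zero_mat(1,2,3))
  then show ?thesis using norm_entry_le_trace_norm[OF assms(1)] by (meson less_le_trans zero_less_norm_iff)
qed

section \<open>Linear maps on \<open>M\<^sub>d\<close>\<close>

lemma matrix_unit_carrier[simp]: "matrix_unit d a b \<in> carrier_mat d d"
  by (simp add: matrix_unit_def)

lemma dim_matrix_unit[simp]: "dim_row (matrix_unit d a b) = d" "dim_col (matrix_unit d a b) = d"
  by (simp_all add: matrix_unit_def)

lemma index_matrix_unit:
  "i < d \<Longrightarrow> j < d \<Longrightarrow> matrix_unit d a b $$ (i,j) = (if i = a \<and> j = b then 1 else 0)"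
  by (simp add: matrix_unit_def)

lemma trace_matrix_unit: "a < d \<Longrightarrow> cmat_trace (matrix_unit d a b) = (if a = b then 1 else 0)"
  by (simp add: cmat_trace_def index_matrix_unit)

lemma linear_on_Md_carrier: "linear_on_Md d F \<Longrightarrow> X \<in> carrier_mat d d \<Longrightarrow> F X \<in> carrier_mat d d"
  unfolding linear_on_Md_def by blast

lemma linear_on_Md_add:
  "linear_on_Md d F \<Longrightarrow> X \<in> carrier_mat d d \<Longrightarrow> Y \<in> carrier_mat d d \<Longrightarrow> F (X + Y) = F X + F Y"
  unfolding linear_on_Md_def by blast

lemma linear_on_Md_smult: "linear_on_Md d F \<Longrightarrow> X \<in> carrier_mat d d \<Longrightarrow> F (c \<cdot>\<^sub>m X) = c \<cdot>\<^sub>m F X"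
  unfolding linear_on_Md_def by blast

lemma linear_on_Md_zero:
  assumes F: "linear_on_Md d F"
  shows "F (0\<^sub>m d d) = 0\<^sub>m d d"
proof -
  have "0\<^sub>m d d = (0::complex) \<cdot>\<^sub>m (0\<^sub>m d d :: complex mat)" by (rule eq_matI) auto
  then have "F (0\<^sub>m d d) = 0 \<cdot>\<^sub>m F (0\<^sub>m d d)" using linear_on_Md_smult[OF F, of "0\<^sub>m d d" 0] by simp
  also have "\<dots> = 0\<^sub>m d d" using linear_on_Md_carrier[OF F, of "0\<^sub>m d d"] by (intro eq_matI) auto
  finally show ?thesis .
qed

lemma linear_on_Md_funpow: "linear_on_Md d E \<Longrightarrow> linear_on_Md d (E ^^ k)"
  by (induction k) (simp_all add: linear_on_Md_def)

lemma trace_preserving_funpow: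
  assumes "linear_on_Md d E" "trace_preserving d E"
  shows "trace_preserving d (E ^^ k)"
  using linear_on_Md_funpow[OF assms(1)] assms(2)
  by (induction k) (auto simp: trace_preserving_def linear_on_Md_def)

text \<open>Adding the entries of \<open>X\<close> one at a time, in row-major order, expands a linear map
  in the basis of matrix units.\<close>

definition leading_entries :: "nat \<Rightarrow> complex mat \<Rightarrow> nat \<Rightarrow> complex mat" where
  "leading_entries d X k = mat d d (\<lambda>(a,b). if a * d + b < k then X $$ (a,b) else 0)"

lemma leading_entries_carrier: "leading_entries d X k \<in> carrier_mat d d"
  by (simp add: leading_entries_def)

lemma leading_entries_0: "leading_entries d X 0 = 0\<^sub>m d d"
  by (rule eq_matI) (auto simp: leading_entries_def)

lemma leading_entries_Suc:
  assumes "k < d * d"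
  shows "leading_entries d X (Suc k) =
    leading_entries d X k + X $$ (k div d, k mod d) \<cdot>\<^sub>m matrix_unit d (k div d) (k mod d)"
proof (rule eq_matI)
  fix a b assume "a < dim_row (leading_entries d X k + X $$ (k div d, k mod d) \<cdot>\<^sub>m matrix_unit d (k div d) (k mod d))"
    "b < dim_col (leading_entries d X k + X $$ (k div d, k mod d) \<cdot>\<^sub>m matrix_unit d (k div d) (k mod d))"
  then have a: "a < d" and b: "b < d" by (auto simp: leading_entries_def)
  have "a * d + b = k \<longleftrightarrow> a = k div d \<and> b = k mod d"
    using b by (auto simp: mod_div_mult_eq add.commute)
  then show "leading_entries d X (Suc k) $$ (a,b) =
      (leading_entries d X k + X $$ (k div d, k mod d) \<cdot>\<^sub>m matrix_unit d (k div d) (k mod d)) $$ (a,b)"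
    using a b by (auto simp: leading_entries_def index_matrix_unit less_Suc_eq)
qed (auto simp: leading_entries_def)

lemma leading_entries_all:
  assumes "X \<in> carrier_mat d d"
  shows "leading_entries d X (d * d) = X"
proof (rule eq_matI)
  fix a b assume "a < dim_row X" "b < dim_col X"
  then have a: "a < d" and b: "b < d" using assms by auto
  have "a * d + b < Suc a * d" using b by simp
  also have "\<dots> \<le> d * d" using a by (metis Suc_leI mult_le_mono1)
  finally show "leading_entries d X (d * d) $$ (a,b) = X $$ (a,b)" using a b by (simp add: leading_entries_def)
qed (use assms in \<open>auto simp: leading_entries_def\<close>)

lemma linear_on_Md_expansion:
  assumes F: "linear_on_Md d F" and X: "X \<in> carrier_mat d d" and i: "i < d" and j: "j < d"
  shows "F X $$ (i,j) = (\<Sum>a<d. \<Sum>b<d. X $$ (a,b) * F (matrix_unit d a b) $$ (i,j))"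
proof -
  have "k \<le> d * d \<Longrightarrow> F (leading_entries d X k) $$ (i,j) =
      (\<Sum>m<k. X $$ (m div d, m mod d) * F (matrix_unit d (m div d) (m mod d)) $$ (i,j))" for k
  proof (induction k)
    case 0
    then show ?case using linear_on_Md_zero[OF F] i j by (simp add: leading_entries_0)
  next
    case (Suc k)
    have "F (leading_entries d X (Suc k)) =
        F (leading_entries d X k) + X $$ (k div d, k mod d) \<cdot>\<^sub>m F (matrix_unit d (k div d) (k mod d))"
      using Suc.prems leading_entries_Suc[of k d X] linear_on_Md_add[OF F leading_entries_carrier]
        linear_on_Md_smult[OF F matrix_unit_carrier] by simp
    then show ?case
      using Suc linear_on_Md_carrier[OF F matrix_unit_carrier, of "k div d" "k mod d"]
        linear_on_Md_carrier[OF F leading_entries_carrier, of X k] i j by simp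
  qed
  from this[of "d * d"] have "F X $$ (i,j) =
      (\<Sum>m<d * d. X $$ (m div d, m mod d) * F (matrix_unit d (m div d) (m mod d)) $$ (i,j))"
    using leading_entries_all[OF X] by simp
  also have "\<dots> = (\<Sum>a<d. \<Sum>b<d. X $$ (a,b) * F (matrix_unit d a b) $$ (i,j))"
    by (subst sum_mult_product) (intro sum.cong refl, simp)
  finally show ?thesis .
qed

section \<open>The ergodicity coefficient\<close>

lemma trace_norm_linear_on_Md_bounded:
  assumes E: "linear_on_Md d E"
  obtains C where "C \<ge> 0" "\<forall>\<sigma> \<in> carrier_mat d d. trace_norm (E \<sigma>) \<le> C * trace_norm \<sigma>"
proof -
  define K where "K i j = (\<Sum>a<d. \<Sum>b<d. cmod (E (matrix_unit d a b) $$ (i,j)))" for i j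
  define C where "C = sqrt (real d) * sqrt (\<Sum>i<d. \<Sum>k<d. (K k i)\<^sup>2)"
  have "trace_norm (E \<sigma>) \<le> C * trace_norm \<sigma>" if \<sigma>: "\<sigma> \<in> carrier_mat d d" for \<sigma>
  proof -
    have E\<sigma>: "E \<sigma> \<in> carrier_mat d d" using linear_on_Md_carrier[OF E \<sigma>] .
    have entry: "cmod (E \<sigma> $$ (i,j)) \<le> trace_norm \<sigma> * K i j" if i: "i < d" and j: "j < d" for i j
    proof -
      have "cmod (E \<sigma> $$ (i,j)) \<le> (\<Sum>a<d. \<Sum>b<d. cmod (\<sigma> $$ (a,b) * E (matrix_unit d a b) $$ (i,j)))"
        unfolding linear_on_Md_expansion[OF E \<sigma> i j] by (intro order.trans[OF norm_sum] sum_mono norm_sum)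
      also have "\<dots> \<le> (\<Sum>a<d. \<Sum>b<d. trace_norm \<sigma> * cmod (E (matrix_unit d a b) $$ (i,j)))"
        using norm_entry_le_trace_norm[OF \<sigma>] by (intro sum_mono) (simp add: norm_mult mult_right_mono)
      finally show ?thesis unfolding K_def by (simp add: sum_distrib_left)
    qed
    have "trace_norm (E \<sigma>) \<le> sqrt (real d) * sqrt (\<Sum>i<d. \<Sum>k<d. (cmod (E \<sigma> $$ (k,i)))\<^sup>2)"
      using trace_norm_le_frobenius[OF E\<sigma>] E\<sigma> by (simp add: frobenius_norm_sq_def)
    also have "\<dots> \<le> sqrt (real d) * sqrt (\<Sum>i<d. \<Sum>k<d. (trace_norm \<sigma> * K k i)\<^sup>2)"
      using entry by (intro mult_left_mono real_sqrt_le_mono sum_mono power_mono) auto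
    also have "\<dots> = C * trace_norm \<sigma>"
      unfolding C_def using trace_norm_nonneg[OF \<sigma>]
      by (simp add: power_mult_distrib sum_distrib_left[symmetric] real_sqrt_mult)
    finally show ?thesis .
  qed
  moreover have "C \<ge> 0" unfolding C_def by (intro mult_nonneg_nonneg real_sqrt_ge_zero sum_nonneg) auto
  ultimately show ?thesis using that by blast
qed

lemma bdd_above_ergodicity_ratios:
  assumes "linear_on_Md d E"
  shows "bdd_above (insert 0 {trace_norm (E \<sigma>) / trace_norm \<sigma> | \<sigma>.
    \<sigma> \<in> carrier_mat d d \<and> \<sigma> \<noteq> 0\<^sub>m d d \<and> cmat_trace \<sigma> = 0})"
proof -
  obtain C where C0: "C \<ge> 0" and C: "\<forall>\<sigma> \<in> carrier_mat d d. trace_norm (E \<sigma>) \<le> C * trace_norm \<sigma>"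
    using trace_norm_linear_on_Md_bounded[OF assms] by blast
  have "trace_norm (E \<sigma>) / trace_norm \<sigma> \<le> C" if "\<sigma> \<in> carrier_mat d d" "\<sigma> \<noteq> 0\<^sub>m d d" for \<sigma>
    using C that trace_norm_pos[OF that] by (simp add: pos_divide_le_eq)
  then show ?thesis using C0 by (intro bdd_aboveI[of _ C]) auto
qed

lemma ergodicity_coeff_nonneg: "linear_on_Md d E \<Longrightarrow> ergodicity_coeff d E \<ge> 0"
  unfolding ergodicity_coeff_def by (rule cSup_upper[OF _ bdd_above_ergodicity_ratios]) auto

lemma trace_norm_le_ergodicity_coeff:
  assumes E: "linear_on_Md d E" and \<sigma>: "\<sigma> \<in> carrier_mat d d" and tr: "cmat_trace \<sigma> = 0"
  shows "trace_norm (E \<sigma>) \<le> ergodicity_coeff d E * trace_norm \<sigma>"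
proof (cases "\<sigma> = 0\<^sub>m d d")
  case True
  then show ?thesis using linear_on_Md_zero[OF E] trace_norm_zero by simp
next
  case False
  have "trace_norm (E \<sigma>) / trace_norm \<sigma> \<le> ergodicity_coeff d E"
    unfolding ergodicity_coeff_def using \<sigma> tr False
    by (intro cSup_upper[OF _ bdd_above_ergodicity_ratios[OF E]]) auto
  then show ?thesis using trace_norm_pos[OF \<sigma> False] by (simp add: pos_divide_le_eq)
qed

lemma trace_norm_funpow_le_ergodicity_coeff_power:
  assumes E: "linear_on_Md d E" and tp: "trace_preserving d E"
    and \<sigma>: "\<sigma> \<in> carrier_mat d d" and tr: "cmat_trace \<sigma> = 0"
  shows "trace_norm ((E ^^ k) \<sigma>) \<le> ergodicity_coeff d E ^ k * trace_norm \<sigma>"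
proof (induction k)
  case (Suc k)
  have "(E ^^ k) \<sigma> \<in> carrier_mat d d" "cmat_trace ((E ^^ k) \<sigma>) = 0"
    using linear_on_Md_carrier[OF linear_on_Md_funpow[OF E] \<sigma>] trace_preserving_funpow[OF E tp, of k] \<sigma> tr
    unfolding trace_preserving_def by auto
  then have "trace_norm ((E ^^ Suc k) \<sigma>) \<le> ergodicity_coeff d E * trace_norm ((E ^^ k) \<sigma>)"
    using trace_norm_le_ergodicity_coeff[OF E] by simp
  also have "\<dots> \<le> ergodicity_coeff d E * (ergodicity_coeff d E ^ k * trace_norm \<sigma>)"
    using Suc ergodicity_coeff_nonneg[OF E] by (rule mult_left_mono)
  finally show ?case by simp
qed simp

section \<open>Positive maps commute with taking adjoints\<close>

definition positive_on_Md :: "nat \<Rightarrow> (complex mat \<Rightarrow> complex mat) \<Rightarrow> bool" where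
  "positive_on_Md d E \<longleftrightarrow> (\<forall>X. psd d X \<longrightarrow> psd d (E X))"

lemma block_0_0: "X \<in> carrier_mat d d \<Longrightarrow> block d X 0 0 = X"
  by (rule eq_matI) (auto simp: block_def)

lemma completely_positive_imp_positive:
  assumes cp: "completely_positive d E" and E: "linear_on_Md d E"
  shows "positive_on_Md d E"
  unfolding positive_on_Md_def
proof (intro allI impI)
  fix X assume X: "psd d X"
  have Xc: "X \<in> carrier_mat d d" using X by (simp add: psd_def)
  have EX: "E X \<in> carrier_mat d d" using linear_on_Md_carrier[OF E Xc] .
  have "id_tensor 1 d E X = E X"
    by (rule eq_matI) (use EX block_0_0[OF Xc] in \<open>auto simp: id_tensor_def\<close>)
  moreover have "psd (1 * d) X" using X by simp
  then have "psd (1 * d) (id_tensor 1 d E X)" using cp unfolding completely_positive_def by blast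
  ultimately show "psd d (E X)" by simp
qed

definition rank_one :: "nat \<Rightarrow> complex vec \<Rightarrow> complex mat" where
  "rank_one d v = mat d d (\<lambda>(i,j). v $ i * cnj (v $ j))"

lemma psd_rank_one:
  assumes v: "v \<in> carrier_vec d"
  shows "psd d (rank_one d v)"
proof -
  have R: "rank_one d v \<in> carrier_mat d d" by (simp add: rank_one_def)
  have "conjugate w \<bullet> (rank_one d v *\<^sub>v w) \<ge> 0" if w: "w \<in> carrier_vec d" for w
  proof -
    define z where "z = (\<Sum>j<d. cnj (v $ j) * w $ j)"
    have "(rank_one d v *\<^sub>v w) $ i = v $ i * z" if "i < d" for i
      using index_mult_mat_vec_sum[OF R w that] that
      by (simp add: z_def rank_one_def sum_distrib_left mult.assoc)
    then have "conjugate w \<bullet> (rank_one d v *\<^sub>v w) = (\<Sum>i<d. cnj (w $ i) * (v $ i * z))"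
      using R w by (simp add: cscalar_prod_sum[of _ d])
    also have "\<dots> = cnj z * z"
      unfolding z_def by (simp add: cnj_sum sum_distrib_right mult.commute mult.left_commute mult.assoc)
    also have "\<dots> = of_real ((cmod z)\<^sup>2)" using complex_of_real_cmod_square[of z] by (simp add: mult.commute)
    finally show ?thesis by (simp only: complex_of_real_nonneg_iff zero_le_power2)
  qed
  moreover have "adj (rank_one d v) = rank_one d v" by (rule eq_matI) (auto simp: rank_one_def mult.commute)
  ultimately show ?thesis unfolding psd_def using R by blast
qed

lemma psd_cnj_entry: "psd d P \<Longrightarrow> i < d \<Longrightarrow> j < d \<Longrightarrow> cnj (P $$ (j,i)) = P $$ (i,j)"
  unfolding psd_def by (metis adjoint_index carrier_matD(1,2))

lemma polarization_cnj_eq: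
  fixes g x y x' y' :: complex
  assumes "g + x + y = g + x' + y'" "g + \<i> * x - \<i> * y = g - \<i> * x' + \<i> * y'"
  shows "x = y'"
proof -
  have sum: "x + y = x' + y'" using assms(1) by simp
  have "\<i> * (x - y) = \<i> * (y' - x')" using assms(2) by (simp add: algebra_simps)
  then have diff: "x - y = y' - x'" by simp
  have "2 * x = (x + y) + (x - y)" by simp
  also have "\<dots> = 2 * y'" unfolding sum diff by simp
  finally show ?thesis by simp
qed

text \<open>
  Positivity on \<open>e\<^sub>a\<^sub>a + e\<^sub>b\<^sub>b + e\<^sub>a\<^sub>b + e\<^sub>b\<^sub>a\<close> and \<open>e\<^sub>a\<^sub>a + e\<^sub>b\<^sub>b - \<i> e\<^sub>a\<^sub>b + \<i> e\<^sub>b\<^sub>a\<close>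
  (the rank-one matrices of \<open>e\<^sub>a + e\<^sub>b\<close> and \<open>e\<^sub>a + \<i> e\<^sub>b\<close>) relates \<open>E(e\<^sub>a\<^sub>b)\<close> to \<open>E(e\<^sub>b\<^sub>a)\<close>.
\<close>

lemma positive_cnj_matrix_unit:
  assumes pos: "positive_on_Md d E" and E: "linear_on_Md d E"
    and a: "a < d" and b: "b < d" and i: "i < d" and j: "j < d"
  shows "cnj (E (matrix_unit d a b) $$ (j,i)) = E (matrix_unit d b a) $$ (i,j)"
proof -
  let ?e = "matrix_unit d"
  have dims: "dim_row (E (?e x y)) = d" "dim_col (E (?e x y)) = d" for x y
    using linear_on_Md_carrier[OF E matrix_unit_carrier] by auto
  have psd_E: "psd d (E (rank_one d v))" if "v \<in> carrier_vec d" for v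
    using pos psd_rank_one[OF that] unfolding positive_on_Md_def by blast
  have diag: "psd d (E (?e x x))" if "x < d" for x
  proof -
    have "?e x x = rank_one d (unit_vec d x)"
      by (rule eq_matI) (use that in \<open>auto simp: rank_one_def matrix_unit_def unit_vec_def\<close>)
    then show ?thesis using psd_E[of "unit_vec d x"] by simp
  qed
  show ?thesis
  proof (cases "a = b")
    case True
    then show ?thesis using psd_cnj_entry[OF diag[OF a] i j] by simp
  next
    case False
    define G where "G = E (?e a a) + E (?e b b)"
    have G: "cnj (G $$ (j,i)) = G $$ (i,j)"
      unfolding G_def using i j dims psd_cnj_entry[OF diag[OF a] i j] psd_cnj_entry[OF diag[OF b] i j] by simp
    have add: "E (X + Y) = E X + E Y" if "X \<in> carrier_mat d d" "Y \<in> carrier_mat d d" for X Y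
      using linear_on_Md_add[OF E that] .
    have "rank_one d (unit_vec d a + unit_vec d b) = ?e a a + ?e b b + ?e a b + ?e b a"
      by (rule eq_matI) (use False a b in \<open>auto simp: rank_one_def matrix_unit_def unit_vec_def\<close>)
    then have "E (rank_one d (unit_vec d a + unit_vec d b)) = G + E (?e a b) + E (?e b a)"
      unfolding G_def by (simp add: add)
    then have h1: "cnj (G $$ (j,i)) + cnj (E (?e a b) $$ (j,i)) + cnj (E (?e b a) $$ (j,i))
        = G $$ (i,j) + E (?e a b) $$ (i,j) + E (?e b a) $$ (i,j)"
      using psd_cnj_entry[OF psd_E[of "unit_vec d a + unit_vec d b"] i j] i j dims
      by (simp add: G_def)
    have "rank_one d (unit_vec d a + \<i> \<cdot>\<^sub>v unit_vec d b) = ?e a a + ?e b b + (-\<i>) \<cdot>\<^sub>m ?e a b + \<i> \<cdot>\<^sub>m ?e b a"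
      by (rule eq_matI) (use False a b in \<open>auto simp: rank_one_def matrix_unit_def unit_vec_def\<close>)
    then have "E (rank_one d (unit_vec d a + \<i> \<cdot>\<^sub>v unit_vec d b))
        = G + (-\<i>) \<cdot>\<^sub>m E (?e a b) + \<i> \<cdot>\<^sub>m E (?e b a)"
      unfolding G_def by (simp add: add linear_on_Md_smult[OF E])
    then have h2: "cnj (G $$ (j,i)) + \<i> * cnj (E (?e a b) $$ (j,i)) - \<i> * cnj (E (?e b a) $$ (j,i))
        = G $$ (i,j) - \<i> * E (?e a b) $$ (i,j) + \<i> * E (?e b a) $$ (i,j)"
      using psd_cnj_entry[OF psd_E[of "unit_vec d a + \<i> \<cdot>\<^sub>v unit_vec d b"] i j] i j dims
      by (simp add: G_def)
    show ?thesis using polarization_cnj_eq[OF h1[unfolded G] h2[unfolded G]] .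
  qed
qed

lemma positive_adjoint:
  assumes pos: "positive_on_Md d E" and E: "linear_on_Md d E" and Y: "Y \<in> carrier_mat d d"
  shows "E (adj Y) = adj (E Y)"
proof -
  have Ya: "adj Y \<in> carrier_mat d d" using Y by simp
  have EY: "E Y \<in> carrier_mat d d" using linear_on_Md_carrier[OF E Y] .
  have EYa: "E (adj Y) \<in> carrier_mat d d" using linear_on_Md_carrier[OF E Ya] .
  show ?thesis
  proof (rule eq_matI)
    fix i j assume "i < dim_row (adj (E Y))" "j < dim_col (adj (E Y))"
    then have i: "i < d" and j: "j < d" using EY by auto
    have "E (adj Y) $$ (i,j) = (\<Sum>a<d. \<Sum>b<d. adj Y $$ (a,b) * E (matrix_unit d a b) $$ (i,j))"
      using linear_on_Md_expansion[OF E Ya i j] .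
    also have "\<dots> = (\<Sum>a<d. \<Sum>b<d. cnj (Y $$ (b,a)) * E (matrix_unit d a b) $$ (i,j))"
      using Y by (intro sum.cong refl) auto
    also have "\<dots> = (\<Sum>b<d. \<Sum>a<d. cnj (Y $$ (b,a)) * E (matrix_unit d a b) $$ (i,j))"
      by (rule sum.swap)
    also have "\<dots> = (\<Sum>b<d. \<Sum>a<d. cnj (Y $$ (b,a) * E (matrix_unit d b a) $$ (j,i)))"
      using positive_cnj_matrix_unit[OF pos E _ _ i j] by (intro sum.cong refl) simp
    also have "\<dots> = cnj (\<Sum>b<d. \<Sum>a<d. Y $$ (b,a) * E (matrix_unit d b a) $$ (j,i))"
      by (simp add: cnj_sum)
    also have "\<dots> = cnj (E Y $$ (j,i))" using linear_on_Md_expansion[OF E Y j i] by simp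
    finally show "E (adj Y) $$ (i,j) = adj (E Y) $$ (i,j)" using EY i j by simp
  qed (use EY EYa in auto)
qed

lemma positive_funpow_adjoint:
  assumes pos: "positive_on_Md d E" and E: "linear_on_Md d E" and Y: "Y \<in> carrier_mat d d"
  shows "(E ^^ k) (adj Y) = adj ((E ^^ k) Y)"
proof (induction k)
  case (Suc k)
  have "(E ^^ k) Y \<in> carrier_mat d d" using linear_on_Md_carrier[OF linear_on_Md_funpow[OF E] Y] .
  then show ?case using Suc positive_adjoint[OF pos E] by simp
qed simp

lemma positive_op_trace_funpow_real:
  assumes pos: "positive_on_Md d E" and E: "linear_on_Md d E"
  shows "Im (op_trace d (E ^^ L)) = 0"
proof -
  let ?F = "E ^^ L"
  have "cnj (?F (matrix_unit d a b) $$ (a,b)) = ?F (matrix_unit d b a) $$ (b,a)" if "a < d" "b < d" for a b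
  proof -
    have "?F (matrix_unit d a b) \<in> carrier_mat d d"
      using linear_on_Md_carrier[OF linear_on_Md_funpow[OF E] matrix_unit_carrier] .
    then have "cnj (?F (matrix_unit d a b) $$ (a,b)) = adj (?F (matrix_unit d a b)) $$ (b,a)"
      using that by simp
    then show ?thesis
      using positive_funpow_adjoint[OF pos E matrix_unit_carrier, of L a b] adjoint_matrix_unit by simp
  qed
  then have "cnj (op_trace d ?F) = (\<Sum>a<d. \<Sum>b<d. ?F (matrix_unit d b a) $$ (b,a))"
    unfolding op_trace_def by (simp add: cnj_sum)
  also have "\<dots> = op_trace d ?F" unfolding op_trace_def by (rule sum.swap)
  finally have "cnj (op_trace d ?F) = op_trace d ?F" .
  then show ?thesis by (metis complex_cnj_cancel_iff Reals_cnj_iff complex_is_Real_iff)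
qed

section \<open>Trace of the iterates\<close>

definition traceless_unit :: "nat \<Rightarrow> nat \<Rightarrow> nat \<Rightarrow> complex mat" where
  "traceless_unit d a b =
    (if a = b then matrix_unit d a a - (1 / of_nat d) \<cdot>\<^sub>m 1\<^sub>m d else matrix_unit d a b)"

lemma traceless_unit_carrier: "traceless_unit d a b \<in> carrier_mat d d"
  by (simp add: traceless_unit_def minus_carrier_mat)

lemma trace_traceless_unit:
  assumes "a < d"
  shows "cmat_trace (traceless_unit d a b) = 0"
proof (cases "a = b")
  case True
  have "cmat_trace ((1 / of_nat d) \<cdot>\<^sub>m 1\<^sub>m d) = 1" using assms by (simp add: cmat_trace_def)
  then show ?thesis
    using True assms trace_matrix_unit trace_minus[OF matrix_unit_carrier, of "(1 / of_nat d) \<cdot>\<^sub>m 1\<^sub>m d" d a a]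
    by (simp add: traceless_unit_def)
qed (simp add: traceless_unit_def trace_matrix_unit assms)

lemma frobenius_norm_sq_traceless_unit:
  assumes a: "a < d" and b: "b < d"
  shows "frobenius_norm_sq (traceless_unit d a b) \<le> 1"
proof (cases "a = b")
  case True
  have "1 - 1 / complex_of_nat d = complex_of_real (1 - 1 / real d)" by simp
  then have diag: "cmod (1 - 1 / complex_of_nat d) = 1 - 1 / real d" using a by (simp only: norm_of_real) simp
  have "frobenius_norm_sq (traceless_unit d a b) =
      (\<Sum>j<d. \<Sum>i<d. if i = j then (if j = a then (1 - 1 / real d)\<^sup>2 else (1 / real d)\<^sup>2) else 0)"
    unfolding frobenius_norm_sq_def traceless_unit_def using True a
    by (intro sum.cong refl) (auto simp: index_matrix_unit norm_divide diag)
  also have "\<dots> = (\<Sum>j<d. (1 / real d)\<^sup>2 + (if j = a then (1 - 1 / real d)\<^sup>2 - (1 / real d)\<^sup>2 else 0))"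
    by (intro sum.cong refl) auto
  also have "\<dots> = real d * (1 / real d)\<^sup>2 + ((1 - 1 / real d)\<^sup>2 - (1 / real d)\<^sup>2)"
    using a by (simp add: sum.distrib)
  also have "\<dots> = 1 - 1 / real d"
    using a by (simp add: power2_eq_square field_simps)
  finally show ?thesis by simp
next
  case False
  have "frobenius_norm_sq (traceless_unit d a b) = (\<Sum>j<d. if j = b then 1 else 0)"
    unfolding frobenius_norm_sq_def traceless_unit_def using False a
    by (intro sum.cong refl) (auto simp: index_matrix_unit if_distrib[of "\<lambda>z. (cmod z)\<^sup>2"] cong: if_cong)
  then show ?thesis using b by simp
qed

lemma trace_norm_traceless_unit:
  assumes "a < d" "b < d"
  shows "trace_norm (traceless_unit d a b) \<le> sqrt (real d)"
proof -
  have "trace_norm (traceless_unit d a b) \<le> sqrt (real d) * sqrt (frobenius_norm_sq (traceless_unit d a b))"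
    using trace_norm_le_frobenius[OF traceless_unit_carrier] .
  also have "\<dots> \<le> sqrt (real d) * 1"
    using frobenius_norm_sq_traceless_unit[OF assms] by (intro mult_left_mono) auto
  finally show ?thesis by simp
qed

lemma op_trace_traceless_decomposition:
  assumes F: "linear_on_Md d F" and tp: "trace_preserving d F" and d: "d \<ge> 1"
  shows "op_trace d F = 1 + (\<Sum>a<d. \<Sum>b<d. F (traceless_unit d a b) $$ (a,b))"
proof -
  define \<rho> where "\<rho> = (1 / of_nat d :: complex) \<cdot>\<^sub>m 1\<^sub>m d"
  have \<rho>: "\<rho> \<in> carrier_mat d d" unfolding \<rho>_def by simp
  have F\<rho>: "F \<rho> \<in> carrier_mat d d" using linear_on_Md_carrier[OF F \<rho>] .
  have unit: "F (matrix_unit d a b) $$ (a,b) =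
      F (traceless_unit d a b) $$ (a,b) + (if a = b then F \<rho> $$ (a,a) else 0)" if "a < d" for a b
  proof (cases "a = b")
    case True
    have "matrix_unit d a a = (matrix_unit d a a - \<rho>) + \<rho>" using \<rho> by (intro eq_matI) auto
    then have "F (matrix_unit d a a) = F (matrix_unit d a a - \<rho>) + F \<rho>"
      using linear_on_Md_add[OF F minus_carrier_mat[OF \<rho>] \<rho>] by metis
    moreover have "traceless_unit d a a = matrix_unit d a a - \<rho>" by (simp add: traceless_unit_def \<rho>_def)
    moreover have "F (matrix_unit d a a - \<rho>) \<in> carrier_mat d d"
      using linear_on_Md_carrier[OF F minus_carrier_mat[OF \<rho>]] .
    ultimately show ?thesis using True that F\<rho> by simp
  qed (simp add: traceless_unit_def)
  have "cmat_trace (F \<rho>) = cmat_trace \<rho>" using tp \<rho> unfolding trace_preserving_def by blast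
  also have "cmat_trace \<rho> = 1" using d by (simp add: \<rho>_def cmat_trace_def)
  finally have "(\<Sum>a<d. F \<rho> $$ (a,a)) = 1" using F\<rho> by (simp add: cmat_trace_def)
  then show ?thesis
    unfolding op_trace_def using unit by (simp add: sum.distrib add.commute)
qed

lemma norm_op_trace_minus_one_le:
  assumes F: "linear_on_Md d F" and tp: "trace_preserving d F" and d: "d \<ge> 1" and c: "c \<ge> 0"
    and contr: "\<And>\<sigma>. \<sigma> \<in> carrier_mat d d \<Longrightarrow> cmat_trace \<sigma> = 0 \<Longrightarrow> trace_norm (F \<sigma>) \<le> c * trace_norm \<sigma>"
  shows "cmod (op_trace d F - 1) \<le> real d powr (5/2) * c"
proof -
  have entry: "cmod (F (traceless_unit d a b) $$ (a,b)) \<le> c * sqrt (real d)" if "a < d" "b < d" for a b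
  proof -
    have "F (traceless_unit d a b) \<in> carrier_mat d d" using linear_on_Md_carrier[OF F traceless_unit_carrier] .
    then have "cmod (F (traceless_unit d a b) $$ (a,b)) \<le> trace_norm (F (traceless_unit d a b))"
      using norm_entry_le_trace_norm that by blast
    also have "\<dots> \<le> c * trace_norm (traceless_unit d a b)"
      using contr[OF traceless_unit_carrier trace_traceless_unit] that by blast
    also have "\<dots> \<le> c * sqrt (real d)" using trace_norm_traceless_unit[OF that] c by (rule mult_left_mono)
    finally show ?thesis .
  qed
  have "cmod (op_trace d F - 1) \<le> (\<Sum>a<d. \<Sum>b<d. cmod (F (traceless_unit d a b) $$ (a,b)))"
    unfolding op_trace_traceless_decomposition[OF F tp d] by (simp add: order.trans[OF norm_sum sum_mono[OF norm_sum]])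
  also have "\<dots> \<le> (\<Sum>a<d. \<Sum>b<d. c * sqrt (real d))" using entry by (intro sum_mono) auto
  also have "\<dots> = real d powr (5/2) * c"
  proof -
    have "real d powr (5/2) = real d powr (2 + 1/2)" by simp
    also have "\<dots> = real d * real d * sqrt (real d)"
      unfolding powr_add using d by (simp add: powr_half_sqrt power2_eq_square)
    finally show ?thesis by simp
  qed
  finally show ?thesis .
qed

theorem mainTheorem16:
  fixes E :: "complex mat \<Rightarrow> complex mat" and d L :: nat
  assumes "d \<ge> 1" and "L \<ge> 1" and "CPTP d E"
  shows "Im (op_trace d (E ^^ L)) = 0 \<and>
    1 - real d powr (5/2) * ergodicity_coeff d E ^ L \<le> Re (op_trace d (E ^^ L)) \<and>
    Re (op_trace d (E ^^ L)) \<le> 1 + real d powr (5/2) * ergodicity_coeff d E ^ L"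
proof -
  have E: "linear_on_Md d E" and cp: "completely_positive d E" and tp: "trace_preserving d E"
    using assms(3) unfolding CPTP_def by auto
  have "cmod (op_trace d (E ^^ L) - 1) \<le> real d powr (5/2) * ergodicity_coeff d E ^ L"
    using norm_op_trace_minus_one_le[OF linear_on_Md_funpow[OF E] trace_preserving_funpow[OF E tp] assms(1)]
      trace_norm_funpow_le_ergodicity_coeff_power[OF E tp] ergodicity_coeff_nonneg[OF E] by simp
  then have "\<bar>Re (op_trace d (E ^^ L)) - 1\<bar> \<le> real d powr (5/2) * ergodicity_coeff d E ^ L"
    using abs_Re_le_cmod[of "op_trace d (E ^^ L) - 1"] by simp
  moreover have "Im (op_trace d (E ^^ L)) = 0"
    using positive_op_trace_funpow_real[OF completely_positive_imp_positive[OF cp E] E] .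
  ultimately show ?thesis by linarith
qed

end
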